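(* Let $\Sigma$ be a free boundary solution in the unit ball $B^3$ (a two-dimensional surface with unit normal $\nu=(\nu_1,\nu_2,\nu_3)$) which is not a plane disk. Then the linear span $\mathcal{C}$ of the functions $\nu_1,\nu_2,\nu_3,\ x\cdot\nu$ on $\Sigma$ is four-dimensional, where $x$ is the position vector.
   Context: A free boundary solution in $B^3$ is a minimal surface properly immersed in $B^3$ whose outward unit conormal along $\partial\Sigma$ agrees with the outward unit normal of $\partial B^3$. *)

theory Defs
  imports "HOL-Analysis.Analysis" "HOL-Analysis.Cross3" "HOL-Library.Function_Algebras"
begin

text \<open>Local coordinates (u,v) live in real \<times> real; the closed upper half plane
  models boundary charts (interior of the surface corresponds to v > 0).\<close>

definition halfplane :: "(real \<times> real) set" where
  "halfplane = {w. snd w \<ge> 0}"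

definition pdir :: "bool \<Rightarrow> real \<times> real" where
  "pdir d = (if d then (0, 1) else (1, 0))"

fun iterpd :: "bool list \<Rightarrow> (real \<times> real \<Rightarrow> 'b::real_normed_vector) \<Rightarrow> real \<times> real \<Rightarrow> 'b" where
  "iterpd [] f = f"
| "iterpd (d # ds) f = (\<lambda>x. vector_derivative (\<lambda>t. iterpd ds f (x + t *\<^sub>R pdir d)) (at 0))"

definition smooth_on :: "(real \<times> real) set \<Rightarrow> (real \<times> real \<Rightarrow> 'b::real_normed_vector) \<Rightarrow> bool" where
  "smooth_on W f \<longleftrightarrow>
     (\<forall>ds. continuous_on W (iterpd ds f) \<and>
       (\<forall>x\<in>W. \<forall>d. ((\<lambda>t. iterpd ds f (x + t *\<^sub>R pdir d))
                      has_vector_derivative iterpd (d # ds) f x) (at 0)))"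

abbreviation Du :: "(real \<times> real \<Rightarrow> real^3) \<Rightarrow> real \<times> real \<Rightarrow> real^3" where
  "Du F \<equiv> iterpd [False] F"
abbreviation Dv :: "(real \<times> real \<Rightarrow> real^3) \<Rightarrow> real \<times> real \<Rightarrow> real^3" where
  "Dv F \<equiv> iterpd [True] F"

definition mean_curvature :: "(real \<times> real \<Rightarrow> real^3) \<Rightarrow> real \<times> real \<Rightarrow> real" where
  "mean_curvature F w =
     (let Fu = Du F w; Fv = Dv F w;
          n = (1 / norm (cross3 Fu Fv)) *\<^sub>R (cross3 Fu Fv);
          E = Fu \<bullet> Fu; Fm = Fu \<bullet> Fv; G = Fv \<bullet> Fv;
          L = iterpd [False, False] F w \<bullet> n;
          Mm = iterpd [False, True] F w \<bullet> n;
          N = iterpd [True, True] F w \<bullet> n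
      in (E * N - 2 * Fm * Mm + G * L) / (2 * (E * G - Fm\<^sup>2)))"

text \<open>Outward unit conormal at a boundary point (v = 0) of a chart: the unit tangent
  vector orthogonal to the boundary curve, pointing away from the surface (v < 0).\<close>
definition outward_conormal :: "(real \<times> real \<Rightarrow> real^3) \<Rightarrow> real \<times> real \<Rightarrow> real^3" where
  "outward_conormal F w =
     (let t = Du F w; q = Dv F w - ((Dv F w \<bullet> t) / (t \<bullet> t)) *\<^sub>R t
      in - ((1 / norm q) *\<^sub>R q))"

text \<open>A local parametrization around p of the abstract surface M (a topological space)
  along which the map X : M \<rightarrow> R^3 is a smooth immersion: psi maps W \<inter> halfplane
  homeomorphically onto an open subset of M containing p, and X \<circ> psi agrees there with
  a smooth immersion F defined on the open set W.\<close>
definition local_param ::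
  "'a::topological_space set \<Rightarrow> ('a \<Rightarrow> real^3) \<Rightarrow> 'a \<Rightarrow> (real \<times> real) set
     \<Rightarrow> (real \<times> real \<Rightarrow> 'a) \<Rightarrow> (real \<times> real \<Rightarrow> real^3) \<Rightarrow> bool" where
  "local_param M X p W \<psi> F \<longleftrightarrow>
     open W \<and> p \<in> \<psi> ` (W \<inter> halfplane) \<and>
     (\<exists>g. homeomorphism (W \<inter> halfplane) (\<psi> ` (W \<inter> halfplane)) \<psi> g) \<and>
     openin (top_of_set M) (\<psi> ` (W \<inter> halfplane)) \<and>
     smooth_on W F \<and>
     (\<forall>w\<in>W \<inter> halfplane. X (\<psi> w) = F w) \<and>
     (\<forall>w\<in>W. cross3 (Du F w) (Dv F w) \<noteq> 0)"

definition immersed_surface :: "'a::t2_space set \<Rightarrow> ('a \<Rightarrow> real^3) \<Rightarrow> bool" where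
  "immersed_surface M X \<longleftrightarrow>
     M \<noteq> {} \<and> compact M \<and> connected M \<and>
     (\<forall>p\<in>M. \<exists>W \<psi> F. local_param M X p W \<psi> F)"

definition surface_boundary :: "'a::topological_space set \<Rightarrow> ('a \<Rightarrow> real^3) \<Rightarrow> 'a set" where
  "surface_boundary M X =
     {p\<in>M. \<exists>W \<psi> F w. local_param M X p W \<psi> F \<and> w \<in> W \<and> snd w = 0 \<and> \<psi> w = p}"

definition unit_normal :: "'a::topological_space set \<Rightarrow> ('a \<Rightarrow> real^3) \<Rightarrow> ('a \<Rightarrow> real^3) \<Rightarrow> bool" where
  "unit_normal M X \<nu> \<longleftrightarrow>
     continuous_on M \<nu> \<and> (\<forall>p\<in>M. norm (\<nu> p) = 1) \<and>
     (\<forall>p W \<psi> F. local_param M X p W \<psi> F \<longrightarrow>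
        (\<forall>w\<in>W \<inter> halfplane. \<nu> (\<psi> w) \<bullet> Du F w = 0 \<and> \<nu> (\<psi> w) \<bullet> Dv F w = 0))"

definition minimal_surface :: "'a::topological_space set \<Rightarrow> ('a \<Rightarrow> real^3) \<Rightarrow> bool" where
  "minimal_surface M X \<longleftrightarrow>
     (\<forall>p W \<psi> F. local_param M X p W \<psi> F \<longrightarrow> (\<forall>w\<in>W \<inter> halfplane. mean_curvature F w = 0))"

text \<open>Free boundary solution in the closed unit ball B^3: minimal, properly immersed
  (X(M) \<subseteq> B^3 and X(p) \<in> \<partial>B^3 iff p \<in> \<partial>M), and the outward unit conormal along the
  boundary equals the outward unit normal X(p) of the sphere.\<close>
definition free_boundary_solution :: "'a::t2_space set \<Rightarrow> ('a \<Rightarrow> real^3) \<Rightarrow> bool" where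
  "free_boundary_solution M X \<longleftrightarrow>
     immersed_surface M X \<and> minimal_surface M X \<and>
     (\<forall>p\<in>M. norm (X p) \<le> 1) \<and>
     (\<forall>p\<in>M. norm (X p) = 1 \<longleftrightarrow> p \<in> surface_boundary M X) \<and>
     (\<forall>p W \<psi> F w. local_param M X p W \<psi> F \<and> w \<in> W \<and> snd w = 0 \<longrightarrow>
        outward_conormal F w = X (\<psi> w))"

definition plane_disk :: "'a set \<Rightarrow> ('a \<Rightarrow> real^3) \<Rightarrow> bool" where
  "plane_disk M X \<longleftrightarrow> (\<exists>a c. a \<noteq> 0 \<and> X ` M = {x. norm x \<le> 1 \<and> a \<bullet> x = c})"

text \<open>Real-valued functions on M, represented by extension by zero outside M.\<close>
definition fun_on :: "'a set \<Rightarrow> ('a \<Rightarrow> real) \<Rightarrow> 'a \<Rightarrow> real" where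
  "fun_on M f = (\<lambda>p. if p \<in> M then f p else 0)"

end

theory Submission
  imports Defs
begin

text \<open>Suppose a \<bullet> \<nu> + c (x \<bullet> \<nu>) = 0 on \<Sigma> with (a, c) \<noteq> 0, i.e. the affine vector field
  a + c x is everywhere tangent to \<Sigma>. Differentiating this relation in a chart shows that,
  wherever a + c x \<noteq> 0, it spans a null direction of the second fundamental form, which is
  therefore singular; being also traceless (\<Sigma> is minimal), it vanishes. An immersion cannot make
  a + c x vanish on an open set, so \<Sigma> is totally geodesic: \<nu> and x \<bullet> \<nu> are locally constant,
  hence constant on the connected \<Sigma>, and \<Sigma> lies in a plane n \<bullet> x = k. Properness (X p lies on
  the sphere exactly at boundary points) gives |k| < 1 and an interior point; the image is then
  open and closed in the open disc and closed in R^3, so it is the whole plane disk.\<close>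

section \<open>Partial derivatives in the parameter plane\<close>

text \<open>Duv F is the u-derivative of Dv F: iterpd differentiates along the head of the list last.\<close>
abbreviation Duu :: "(real \<times> real \<Rightarrow> 'b::real_normed_vector) \<Rightarrow> real \<times> real \<Rightarrow> 'b" where
  "Duu F \<equiv> iterpd [False, False] F"
abbreviation Duv :: "(real \<times> real \<Rightarrow> 'b::real_normed_vector) \<Rightarrow> real \<times> real \<Rightarrow> 'b" where
  "Duv F \<equiv> iterpd [False, True] F"
abbreviation Dvu :: "(real \<times> real \<Rightarrow> 'b::real_normed_vector) \<Rightarrow> real \<times> real \<Rightarrow> 'b" where
  "Dvu F \<equiv> iterpd [True, False] F"
abbreviation Dvv :: "(real \<times> real \<Rightarrow> 'b::real_normed_vector) \<Rightarrow> real \<times> real \<Rightarrow> 'b" where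
  "Dvv F \<equiv> iterpd [True, True] F"

lemma smooth_on_continuous_on:
  "smooth_on W f \<Longrightarrow> continuous_on W (iterpd ds f)"
  unfolding smooth_on_def by blast

lemma smooth_on_has_vector_derivative_shifted:
  assumes "smooth_on W f" "w \<in> W"
  shows "((\<lambda>s. iterpd ds f (w + (s - s0) *\<^sub>R pdir d)) has_vector_derivative iterpd (d # ds) f w) (at s0)"
proof -
  have "((\<lambda>t. iterpd ds f (w + t *\<^sub>R pdir d)) has_vector_derivative iterpd (d # ds) f w) (at 0)"
    using assms unfolding smooth_on_def by blast
  moreover have "((\<lambda>s. s - s0) has_vector_derivative 1) (at s0)"
    by (auto intro!: derivative_eq_intros)
  ultimately show ?thesis
    using vector_diff_chain_at[of "\<lambda>s. s - s0" 1 s0] by (simp add: o_def)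
qed

lemma smooth_on_has_vector_derivative_fst:
  assumes "smooth_on W f" "(x, y) \<in> W"
  shows "((\<lambda>x'. iterpd ds f (x', y)) has_vector_derivative iterpd (False # ds) f (x, y)) (at x)"
  using smooth_on_has_vector_derivative_shifted[OF assms, of ds x False] by (simp add: pdir_def)

lemma smooth_on_has_vector_derivative_snd:
  assumes "smooth_on W f" "(x, y) \<in> W"
  shows "((\<lambda>y'. iterpd ds f (x, y')) has_vector_derivative iterpd (True # ds) f (x, y)) (at y)"
  using smooth_on_has_vector_derivative_shifted[OF assms, of ds y True] by (simp add: pdir_def)

lemma open_contains_box:
  assumes "open W" "(x, y) \<in> W"
  obtains e where "e > 0" "ball x e \<times> ball y e \<subseteq> W"
proof -
  obtain r where r: "r > 0" "ball (x, y) r \<subseteq> W"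
    using assms open_contains_ball by blast
  have "ball x (r/2) \<times> ball y (r/2) \<subseteq> ball (x, y) r"
  proof
    fix z assume z: "z \<in> ball x (r/2) \<times> ball y (r/2)"
    have "dist z (x, y) \<le> dist (fst z) x + dist (snd z) y"
      by (cases z) (simp add: dist_Pair_Pair sqrt_sum_squares_le_sum)
    with z show "z \<in> ball (x, y) r"
      by (auto simp: dist_commute)
  qed
  with r that[of "r/2"] show ?thesis by auto
qed

lemma smooth_on_has_derivative:
  assumes "smooth_on W f" "open W" "w \<in> W"
  shows "(iterpd ds f has_derivative
           (\<lambda>h. fst h *\<^sub>R iterpd (False # ds) f w + snd h *\<^sub>R iterpd (True # ds) f w)) (at w)"
proof -
  obtain x y where w: "w = (x, y)" by force
  obtain e where e: "e > 0" "ball x e \<times> ball y e \<subseteq> W"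
    using open_contains_box assms w by metis
  have fst_deriv: "((\<lambda>a. iterpd ds f (a, y)) has_derivative (\<lambda>h. h *\<^sub>R iterpd (False # ds) f (x, y)))
      (at x within ball x e)"
    using smooth_on_has_vector_derivative_fst[OF assms(1), of x y ds] assms w
    by (simp add: has_vector_derivative_def has_derivative_at_withinI)
  have snd_deriv: "((\<lambda>b. iterpd ds f (a, b)) has_derivative
      blinfun_apply (blinfun_scaleR_left (iterpd (True # ds) f (a, b)))) (at b within ball y e)"
    if "a \<in> ball x e" "b \<in> ball y e" for a b
  proof -
    have "(a, b) \<in> W"
      using e that by auto
    from smooth_on_has_vector_derivative_snd[OF assms(1) this, of ds] show ?thesis
      by (auto simp: has_vector_derivative_def intro: has_derivative_at_withinI)
  qed
  have "isCont (iterpd (True # ds) f) (x, y)"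
    using smooth_on_continuous_on[OF assms(1)] assms w continuous_on_eq_continuous_at by blast
  then have snd_cont: "continuous (at (x, y) within ball x e \<times> ball y e)
      (\<lambda>(a, b). blinfun_scaleR_left (iterpd (True # ds) f (a, b)))"
    by (simp add: case_prod_beta' continuous_at_imp_continuous_within continuous_intros)
  have "((\<lambda>(a, b). iterpd ds f (a, b)) has_derivative
      (\<lambda>(s, t). s *\<^sub>R iterpd (False # ds) f (x, y) + blinfun_scaleR_left (iterpd (True # ds) f (x, y)) t))
      (at (x, y) within ball x e \<times> ball y e)"
    by (rule has_derivative_partialsI[OF fst_deriv snd_deriv snd_cont]) (use e in auto)
  then show ?thesis
    using e w by (subst (asm) at_within_open) (auto simp: open_Times case_prod_beta')
qed

lemma has_vector_derivative_linearization_bound: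
  fixes f :: "real \<Rightarrow> 'b::real_normed_vector"
  assumes "a \<le> b"
    and "\<And>t. t \<in> {a..b} \<Longrightarrow> (f has_vector_derivative f' t) (at t)"
    and "\<And>t. t \<in> {a..b} \<Longrightarrow> norm (f' t - A) \<le> \<epsilon>"
  shows "norm (f b - f a - (b - a) *\<^sub>R A) \<le> \<epsilon> * (b - a)"
proof -
  have "norm ((f b - b *\<^sub>R A) - (f a - a *\<^sub>R A)) \<le> \<epsilon> * norm (b - a)"
  proof (rule differentiable_bound[of "{a..b}" "\<lambda>t. f t - t *\<^sub>R A" "\<lambda>t h. h *\<^sub>R (f' t - A)"])
    show "((\<lambda>t. f t - t *\<^sub>R A) has_derivative (\<lambda>h. h *\<^sub>R (f' t - A))) (at t within {a..b})"
      if "t \<in> {a..b}" for t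
    proof -
      have "((\<lambda>t. f t - t *\<^sub>R A) has_vector_derivative f' t - A) (at t)"
        using assms(2)[OF that] by (auto intro!: derivative_eq_intros)
      then show ?thesis
        by (simp add: has_vector_derivative_def has_derivative_at_withinI)
    qed
    show "onorm (\<lambda>h. h *\<^sub>R (f' t - A)) \<le> \<epsilon>" if "t \<in> {a..b}" for t
      using assms(3)[OF that] onorm_scaleR_left[OF bounded_linear_ident, of "f' t - A"] onorm_id[where 'a=real]
      by simp
  qed (use assms(1) in auto)
  then show ?thesis
    using assms(1) by (simp add: algebra_simps)
qed

lemma mixed_difference_bound:
  fixes g gu guv :: "real \<times> real \<Rightarrow> 'b::real_normed_vector"
  assumes "h \<ge> 0" "k \<ge> 0"
    and "\<And>a b. a \<in> {x..x+h} \<Longrightarrow> b \<in> {y..y+k} \<Longrightarrow>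
           ((\<lambda>a'. g (a', b)) has_vector_derivative gu (a, b)) (at a)"
    and "\<And>a b. a \<in> {x..x+h} \<Longrightarrow> b \<in> {y..y+k} \<Longrightarrow>
           ((\<lambda>b'. gu (a, b')) has_vector_derivative guv (a, b)) (at b)"
    and "\<And>a b. a \<in> {x..x+h} \<Longrightarrow> b \<in> {y..y+k} \<Longrightarrow> norm (guv (a, b) - A) \<le> \<epsilon>"
  shows "norm (g (x+h, y+k) - g (x+h, y) - g (x, y+k) + g (x, y) - (h * k) *\<^sub>R A) \<le> \<epsilon> * h * k"
proof -
  have edges: "y \<in> {y..y+k}" "y + k \<in> {y..y+k}"
    using assms(2) by auto
  have "norm (gu (a, y+k) - gu (a, y) - k *\<^sub>R A) \<le> \<epsilon> * k" if "a \<in> {x..x+h}" for a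
    using has_vector_derivative_linearization_bound[of y "y+k" "\<lambda>b. gu (a, b)" "\<lambda>b. guv (a, b)" A \<epsilon>]
      assms(2,4,5) that by simp
  then have "norm ((g (x+h, y+k) - g (x+h, y)) - (g (x, y+k) - g (x, y)) - h *\<^sub>R (k *\<^sub>R A)) \<le> (\<epsilon> * k) * h"
    using has_vector_derivative_linearization_bound[of x "x+h" "\<lambda>a. g (a, y+k) - g (a, y)"
        "\<lambda>a. gu (a, y+k) - gu (a, y)" "k *\<^sub>R A" "\<epsilon> * k"]
      assms(1) assms(3)[OF _ edges(1)] assms(3)[OF _ edges(2)]
    by (simp add: has_vector_derivative_diff)
  then show ?thesis
    by (simp add: algebra_simps)
qed

lemma continuous_on_corner_box:
  fixes x y :: real
  assumes "open W" "(x, y) \<in> W" "continuous_on W g" "\<epsilon> > 0"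
  obtains s where "s > 0"
    "\<And>a b. a \<in> {x..x+s} \<Longrightarrow> b \<in> {y..y+s} \<Longrightarrow> (a, b) \<in> W \<and> norm (g (a, b) - g (x, y)) \<le> \<epsilon>"
proof -
  obtain e where e: "e > 0" "ball (x, y) e \<subseteq> W"
    using assms(1,2) open_contains_ball by blast
  obtain d where d: "d > 0" "\<And>z. z \<in> W \<Longrightarrow> dist z (x, y) < d \<Longrightarrow> dist (g z) (g (x, y)) < \<epsilon>"
    using assms(2-4) unfolding continuous_on_iff by metis
  define s where "s = min e d / 3"
  have "(a, b) \<in> W \<and> norm (g (a, b) - g (x, y)) \<le> \<epsilon>" if "a \<in> {x..x+s}" "b \<in> {y..y+s}" for a b
  proof -
    have "dist (a, b) (x, y) \<le> dist a x + dist b y"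
      by (simp add: dist_Pair_Pair sqrt_sum_squares_le_sum)
    also have "\<dots> < min e d"
      using that e d by (auto simp: s_def dist_real_def)
    finally have "dist (a, b) (x, y) < min e d" .
    moreover from this have "(a, b) \<in> W"
      using e by (auto simp: dist_commute)
    ultimately show ?thesis
      using d(2)[of "(a, b)"] by (simp add: dist_norm)
  qed
  moreover have "s > 0"
    using e d by (simp add: s_def)
  ultimately show ?thesis
    using that by blast
qed

lemma second_difference_bound_Dvu:
  assumes "smooth_on W f" "s \<ge> 0"
    and "\<And>a b. a \<in> {x..x+s} \<Longrightarrow> b \<in> {y..y+s} \<Longrightarrow> (a, b) \<in> W \<and> norm (Dvu f (a, b) - A) \<le> \<epsilon>"
  shows "norm (f (x+s, y+s) - f (x+s, y) - f (x, y+s) + f (x, y) - (s * s) *\<^sub>R A) \<le> \<epsilon> * s * s"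
proof (rule mixed_difference_bound[where gu = "iterpd [False] f" and guv = "Dvu f"])
  fix a b assume ab: "a \<in> {x..x+s}" "b \<in> {y..y+s}"
  then have "(a, b) \<in> W"
    using assms(3) by blast
  show "((\<lambda>a'. f (a', b)) has_vector_derivative iterpd [False] f (a, b)) (at a)"
    using smooth_on_has_vector_derivative_fst[OF assms(1) \<open>(a, b) \<in> W\<close>, of "[]"] by (simp only: iterpd.simps(1))
  show "((\<lambda>b'. iterpd [False] f (a, b')) has_vector_derivative Dvu f (a, b)) (at b)"
    by (rule smooth_on_has_vector_derivative_snd[OF assms(1) \<open>(a, b) \<in> W\<close>])
  show "norm (Dvu f (a, b) - A) \<le> \<epsilon>"
    using assms(3) ab by blast
qed (use assms(2) in simp_all)

lemma second_difference_bound_Duv: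
  assumes "smooth_on W f" "s \<ge> 0"
    and "\<And>a b. a \<in> {x..x+s} \<Longrightarrow> b \<in> {y..y+s} \<Longrightarrow> (a, b) \<in> W \<and> norm (Duv f (a, b) - B) \<le> \<epsilon>"
  shows "norm (f (x+s, y+s) - f (x+s, y) - f (x, y+s) + f (x, y) - (s * s) *\<^sub>R B) \<le> \<epsilon> * s * s"
proof -
  have "norm (f (x+s, y+s) - f (x, y+s) - f (x+s, y) + f (x, y) - (s * s) *\<^sub>R B) \<le> \<epsilon> * s * s"
  proof (rule mixed_difference_bound[where g = "\<lambda>z. f (snd z, fst z)" and gu = "\<lambda>z. iterpd [True] f (snd z, fst z)"
        and guv = "\<lambda>z. Duv f (snd z, fst z)", simplified fst_conv snd_conv])
    fix b a assume ba: "b \<in> {y..y+s}" "a \<in> {x..x+s}"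
    then have "(a, b) \<in> W"
      using assms(3) by blast
    show "((\<lambda>b'. f (a, b')) has_vector_derivative iterpd [True] f (a, b)) (at b)"
      using smooth_on_has_vector_derivative_snd[OF assms(1) \<open>(a, b) \<in> W\<close>, of "[]"] by (simp only: iterpd.simps(1))
    show "((\<lambda>a'. iterpd [True] f (a', b)) has_vector_derivative Duv f (a, b)) (at a)"
      by (rule smooth_on_has_vector_derivative_fst[OF assms(1) \<open>(a, b) \<in> W\<close>])
    show "norm (Duv f (a, b) - B) \<le> \<epsilon>"
      using assms(3) ba by blast
  qed (use assms(2) in simp_all)
  then show ?thesis
    by (simp add: algebra_simps)
qed

text \<open>Both mixed partials at w are limits of the same second difference quotient over small
  squares with corner w.\<close>
lemma smooth_on_mixed_partials_eq:
  assumes "smooth_on W f" "open W" "w \<in> W"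
  shows "Dvu f w = Duv f w"
proof (rule ccontr)
  define A B where "A = Dvu f w" and "B = Duv f w"
  assume "Dvu f w \<noteq> Duv f w"
  then have \<epsilon>: "norm (A - B) / 4 > 0"
    by (simp add: A_def B_def)
  obtain x y where w: "w = (x, y)" by force
  obtain s1 where s1: "s1 > 0" "\<And>a b. a \<in> {x..x+s1} \<Longrightarrow> b \<in> {y..y+s1} \<Longrightarrow>
      (a, b) \<in> W \<and> norm (Dvu f (a, b) - A) \<le> norm (A - B) / 4"
    using continuous_on_corner_box[OF assms(2) _ smooth_on_continuous_on[OF assms(1)] \<epsilon>] assms(3) w
    unfolding A_def by metis
  obtain s2 where s2: "s2 > 0" "\<And>a b. a \<in> {x..x+s2} \<Longrightarrow> b \<in> {y..y+s2} \<Longrightarrow>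
      (a, b) \<in> W \<and> norm (Duv f (a, b) - B) \<le> norm (A - B) / 4"
    using continuous_on_corner_box[OF assms(2) _ smooth_on_continuous_on[OF assms(1)] \<epsilon>] assms(3) w
    unfolding B_def by metis
  define s where "s = min s1 s2"
  have "s > 0"
    using s1(1) s2(1) by (simp add: s_def)
  define \<Delta> where "\<Delta> = f (x+s, y+s) - f (x+s, y) - f (x, y+s) + f (x, y)"
  have "norm (\<Delta> - (s * s) *\<^sub>R A) \<le> norm (A - B) / 4 * s * s"
    unfolding \<Delta>_def using \<open>s > 0\<close> s1(2)
    by (intro second_difference_bound_Dvu[OF assms(1)]) (auto simp: s_def)
  moreover have "norm (\<Delta> - (s * s) *\<^sub>R B) \<le> norm (A - B) / 4 * s * s"
    unfolding \<Delta>_def using \<open>s > 0\<close> s2(2)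
    by (intro second_difference_bound_Duv[OF assms(1)]) (auto simp: s_def)
  ultimately have "norm ((s * s) *\<^sub>R (A - B)) \<le> norm (A - B) / 2 * (s * s)"
    using norm_triangle_ineq4[of "\<Delta> - (s * s) *\<^sub>R B" "\<Delta> - (s * s) *\<^sub>R A"]
    by (simp add: algebra_simps)
  then show False
    using \<epsilon> \<open>s > 0\<close> by simp
qed

section \<open>Linear algebra in three dimensions\<close>

lemma cross3_triple_expansion:
  fixes a b c :: "real^3"
  shows "cross3 a (cross3 b c) = (a \<bullet> c) *\<^sub>R b - (a \<bullet> b) *\<^sub>R c"
  unfolding vec_eq_iff forall_3 by (simp add: cross3_simps)

lemma cross3_gram_decomposition:
  fixes t u v :: "real^3"
  shows "((u \<bullet> u) * (v \<bullet> v) - (u \<bullet> v)^2) *\<^sub>R t =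
    ((v \<bullet> v) * (t \<bullet> u) - (u \<bullet> v) * (t \<bullet> v)) *\<^sub>R u + ((u \<bullet> u) * (t \<bullet> v) - (u \<bullet> v) * (t \<bullet> u)) *\<^sub>R v
    + (t \<bullet> cross3 u v) *\<^sub>R cross3 u v"
  unfolding vec_eq_iff forall_3 by (simp add: cross3_simps power2_eq_square)

lemma gram_det_eq_cross3:
  fixes u v :: "real^3"
  shows "(u \<bullet> u) * (v \<bullet> v) - (u \<bullet> v)^2 = cross3 u v \<bullet> cross3 u v"
  using norm_cross_dot[of u v, unfolded power_mult_distrib power2_norm_eq_inner] by linarith

lemma gram_det_pos:
  fixes u v :: "real^3"
  assumes "cross3 u v \<noteq> 0"
  shows "(u \<bullet> u) * (v \<bullet> v) - (u \<bullet> v)^2 > 0"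
  using assms by (simp add: gram_det_eq_cross3)

lemma orthogonal_frame_eq_0:
  fixes z u v :: "real^3"
  assumes "cross3 u v \<noteq> 0" "z \<bullet> u = 0" "z \<bullet> v = 0" "z \<bullet> cross3 u v = 0"
  shows "z = 0"
proof -
  have "((u \<bullet> u) * (v \<bullet> v) - (u \<bullet> v)^2) *\<^sub>R z = 0"
    using cross3_gram_decomposition[of u v z] assms(2-4) by (simp add: inner_commute)
  with gram_det_pos[OF assms(1)] show ?thesis by simp
qed

lemma orthogonal_cross3_parallel:
  fixes x u v :: "real^3"
  assumes "x \<bullet> u = 0" "x \<bullet> v = 0"
  shows "(cross3 u v \<bullet> cross3 u v) *\<^sub>R x = (x \<bullet> cross3 u v) *\<^sub>R cross3 u v"
  using cross3_gram_decomposition[of u v x] assms by (simp add: gram_det_eq_cross3 inner_commute)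

lemma orthogonal_cross3_eq_sgn:
  fixes x u v :: "real^3"
  assumes "cross3 u v \<noteq> 0" "x \<bullet> u = 0" "x \<bullet> v = 0"
  shows "x = (x \<bullet> sgn (cross3 u v)) *\<^sub>R sgn (cross3 u v)"
proof -
  define C where "C = cross3 u v"
  have "C \<bullet> C \<noteq> 0"
    using assms(1) by (simp add: C_def)
  then have "x = inverse (C \<bullet> C) *\<^sub>R ((C \<bullet> C) *\<^sub>R x)"
    by simp
  also have "\<dots> = (x \<bullet> sgn C) *\<^sub>R sgn C"
    using orthogonal_cross3_parallel[OF assms(2,3)]
    by (simp add: C_def sgn_div_norm power2_norm_eq_inner[symmetric] power2_eq_square divide_inverse mult.commute)
  finally show ?thesis
    unfolding C_def .
qed

lemma eq_if_inner_eq_tangent_normal: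
  fixes x y u v n :: "real^3"
  assumes "cross3 u v \<noteq> 0" "n \<bullet> u = 0" "n \<bullet> v = 0" "n \<noteq> 0"
    and "x \<bullet> u = y \<bullet> u" "x \<bullet> v = y \<bullet> v" "x \<bullet> n = y \<bullet> n"
  shows "x = y"
proof -
  define s where "s = n \<bullet> sgn (cross3 u v)"
  have n: "n = s *\<^sub>R sgn (cross3 u v)"
    unfolding s_def by (rule orthogonal_cross3_eq_sgn[OF assms(1-3)])
  with assms(4) have "s \<noteq> 0"
    by auto
  have "s * ((x - y) \<bullet> sgn (cross3 u v)) = 0"
    using assms(7) by (subst (asm) (1 2) n) (simp add: inner_diff_left algebra_simps)
  with \<open>s \<noteq> 0\<close> assms(1) have "(x - y) \<bullet> cross3 u v = 0"
    by (simp add: sgn_div_norm)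
  with assms(1,5,6) have "x - y = 0"
    by (intro orthogonal_frame_eq_0[of u v]) (simp_all add: inner_diff_left)
  then show ?thesis
    by simp
qed

lemma orthogonal_cross3_inner_square:
  fixes x y u v :: "real^3"
  assumes "cross3 u v \<noteq> 0" "x \<bullet> u = 0" "x \<bullet> v = 0" "y \<bullet> u = 0" "y \<bullet> v = 0"
  shows "(x \<bullet> y)^2 = (x \<bullet> x) * (y \<bullet> y)"
proof -
  define C where "C = cross3 u v"
  have C: "(C \<bullet> C) *\<^sub>R x = (x \<bullet> C) *\<^sub>R C" "(C \<bullet> C) *\<^sub>R y = (y \<bullet> C) *\<^sub>R C"
    using orthogonal_cross3_parallel assms unfolding C_def by blast+
  have "C \<bullet> C \<noteq> 0"
    using assms(1) by (simp add: C_def)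
  define a b where "a = (x \<bullet> C) / (C \<bullet> C)" and "b = (y \<bullet> C) / (C \<bullet> C)"
  have "x = inverse (C \<bullet> C) *\<^sub>R ((C \<bullet> C) *\<^sub>R x)" "y = inverse (C \<bullet> C) *\<^sub>R ((C \<bullet> C) *\<^sub>R y)"
    using \<open>C \<bullet> C \<noteq> 0\<close> by simp_all
  then have "x = a *\<^sub>R C" "y = b *\<^sub>R C"
    unfolding C a_def b_def by (simp_all add: divide_inverse mult.commute)
  then show ?thesis
    by (simp add: power2_eq_square algebra_simps)
qed

lemma traceless_singular_form_eq_0:
  fixes E F G L M N :: real
  assumes "E > 0" "E * G - F^2 > 0" "E * N - 2 * F * M + G * L = 0" "L * N = M^2"
  shows "L = 0 \<and> M = 0 \<and> N = 0"
proof -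
  have "(E * N - G * L)^2 = (E * N + G * L)^2 - 4 * E * G * (L * N)"
    by algebra
  also have "\<dots> = - 4 * (E * G - F^2) * M^2"
    using assms(3,4) by (simp add: algebra_simps power2_eq_square)
  finally have sq: "(E * N - G * L)^2 = - 4 * (E * G - F^2) * M^2" .
  have "M = 0"
  proof (rule ccontr)
    assume "M \<noteq> 0"
    then have "M^2 > 0"
      by simp
    then have "- 4 * (E * G - F^2) * M^2 < 0"
      using assms(2) by (simp add: mult_pos_pos mult_neg_pos)
    with sq show False
      by (metis zero_le_power2 not_le)
  qed
  with sq assms(2,3) have "E * N = 0" "E * N = G * L"
    by auto
  moreover have "E * G > 0"
    using assms(2) zero_le_power2[of F] by linarith
  then have "G > 0"
    using assms(1) by (simp add: zero_less_mult_iff)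
  ultimately show ?thesis
    using assms(1) \<open>M = 0\<close> by simp
qed

text \<open>Read u, v, P, Q, R as F_u, F_v, F_uu, F_uv, F_vv: the hypotheses on t say that the tangent
  vector t lies in the kernel of the second fundamental form (C \<bullet> P, C \<bullet> Q, C \<bullet> R).\<close>
lemma second_form_singular_of_kernel:
  fixes u v P Q R t :: "real^3"
  defines "C \<equiv> cross3 u v"
  assumes "C \<noteq> 0" "t \<noteq> 0" "t \<bullet> C = 0"
    and "t \<bullet> (cross3 P v + cross3 u Q) = 0" "t \<bullet> (cross3 Q v + cross3 u R) = 0"
  shows "(C \<bullet> P) * (C \<bullet> R) = (C \<bullet> Q)^2"
proof -
  define De where "De = (u \<bullet> u) * (v \<bullet> v) - (u \<bullet> v)^2"
  define \<alpha> where "\<alpha> = (v \<bullet> v) * (t \<bullet> u) - (u \<bullet> v) * (t \<bullet> v)"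
  define \<beta> where "\<beta> = (u \<bullet> u) * (t \<bullet> v) - (u \<bullet> v) * (t \<bullet> u)"
  have t: "De *\<^sub>R t = \<alpha> *\<^sub>R u + \<beta> *\<^sub>R v"
    using cross3_gram_decomposition[of u v t] assms(4) unfolding De_def \<alpha>_def \<beta>_def C_def by simp
  have triple: "u \<bullet> cross3 P v = - (C \<bullet> P)" "v \<bullet> cross3 P v = 0" "u \<bullet> cross3 u Q = 0"
    "v \<bullet> cross3 u Q = - (C \<bullet> Q)" "u \<bullet> cross3 Q v = - (C \<bullet> Q)" "v \<bullet> cross3 Q v = 0"
    "u \<bullet> cross3 u R = 0" "v \<bullet> cross3 u R = - (C \<bullet> R)"
    unfolding C_def by (simp_all add: cross3_simps)
  have "De * (t \<bullet> (cross3 P v + cross3 u Q)) = - \<alpha> * (C \<bullet> P) - \<beta> * (C \<bullet> Q)"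
    "De * (t \<bullet> (cross3 Q v + cross3 u R)) = - \<alpha> * (C \<bullet> Q) - \<beta> * (C \<bullet> R)"
    using arg_cong[OF t, of "\<lambda>x. x \<bullet> (cross3 P v + cross3 u Q)"]
      arg_cong[OF t, of "\<lambda>x. x \<bullet> (cross3 Q v + cross3 u R)"]
    by (simp_all add: inner_add_left inner_add_right triple distrib_left)
  then have kernel: "\<alpha> * (C \<bullet> P) + \<beta> * (C \<bullet> Q) = 0" "\<alpha> * (C \<bullet> Q) + \<beta> * (C \<bullet> R) = 0"
    using assms(5,6) by simp_all
  have "De > 0"
    using gram_det_pos assms(2) unfolding De_def C_def by blast
  then have "\<alpha> \<noteq> 0 \<or> \<beta> \<noteq> 0"
    using t assms(3) by auto
  moreover have "\<alpha> * ((C \<bullet> P) * (C \<bullet> R) - (C \<bullet> Q)^2)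
      = (C \<bullet> R) * (\<alpha> * (C \<bullet> P) + \<beta> * (C \<bullet> Q)) - (C \<bullet> Q) * (\<alpha> * (C \<bullet> Q) + \<beta> * (C \<bullet> R))"
    "\<beta> * ((C \<bullet> P) * (C \<bullet> R) - (C \<bullet> Q)^2)
      = (C \<bullet> P) * (\<alpha> * (C \<bullet> Q) + \<beta> * (C \<bullet> R)) - (C \<bullet> Q) * (\<alpha> * (C \<bullet> P) + \<beta> * (C \<bullet> Q))"
    by (simp_all add: algebra_simps power2_eq_square)
  then have "\<alpha> * ((C \<bullet> P) * (C \<bullet> R) - (C \<bullet> Q)^2) = 0" "\<beta> * ((C \<bullet> P) * (C \<bullet> R) - (C \<bullet> Q)^2) = 0"
    unfolding kernel by simp_all
  ultimately show ?thesis
    by auto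
qed

lemma second_form_eq_0_of_kernel:
  fixes u v P Q R t :: "real^3"
  defines "C \<equiv> cross3 u v"
  assumes "C \<noteq> 0" "t \<noteq> 0" "t \<bullet> C = 0"
    and "t \<bullet> (cross3 P v + cross3 u Q) = 0" "t \<bullet> (cross3 Q v + cross3 u R) = 0"
    and "(u \<bullet> u) * (C \<bullet> R) - 2 * (u \<bullet> v) * (C \<bullet> Q) + (v \<bullet> v) * (C \<bullet> P) = 0"
  shows "C \<bullet> P = 0 \<and> C \<bullet> Q = 0 \<and> C \<bullet> R = 0"
proof (rule traceless_singular_form_eq_0)
  show "u \<bullet> u > 0"
    using assms(2) by (auto simp: C_def)
  show "(u \<bullet> u) * (v \<bullet> v) - (u \<bullet> v)^2 > 0"
    using gram_det_pos assms(2) unfolding C_def by blast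
  show "(C \<bullet> P) * (C \<bullet> R) = (C \<bullet> Q)^2"
    using second_form_singular_of_kernel assms(2-6) unfolding C_def by blast
qed (fact assms(7))

section \<open>Second fundamental form of a chart\<close>

definition chart_normal :: "(real \<times> real \<Rightarrow> real^3) \<Rightarrow> real \<times> real \<Rightarrow> real^3" where
  "chart_normal F w = cross3 (Du F w) (Dv F w)"

definition totally_geodesic_at :: "(real \<times> real \<Rightarrow> real^3) \<Rightarrow> real \<times> real \<Rightarrow> bool" where
  "totally_geodesic_at F w \<longleftrightarrow>
     chart_normal F w \<bullet> Duu F w = 0 \<and> chart_normal F w \<bullet> Duv F w = 0 \<and> chart_normal F w \<bullet> Dvv F w = 0"

lemma chart_has_derivative:
  assumes "smooth_on W F" "open W" "w \<in> W"
  shows "(F has_derivative (\<lambda>h. fst h *\<^sub>R Du F w + snd h *\<^sub>R Dv F w)) (at w)"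
  using smooth_on_has_derivative[OF assms, of "[]"] by (simp only: iterpd.simps(1))

lemma chart_normal_continuous_on:
  "smooth_on W F \<Longrightarrow> continuous_on W (chart_normal F)"
  unfolding chart_normal_def by (intro continuous_on_cross smooth_on_continuous_on)

lemma chart_normal_has_derivative:
  assumes "smooth_on W F" "open W" "w \<in> W"
  shows "(chart_normal F has_derivative (\<lambda>h.
     cross3 (fst h *\<^sub>R Duu F w + snd h *\<^sub>R Duv F w) (Dv F w)
   + cross3 (Du F w) (fst h *\<^sub>R Duv F w + snd h *\<^sub>R Dvv F w))) (at w)"
proof -
  have "bounded_bilinear (cross3 :: real^3 \<Rightarrow> real^3 \<Rightarrow> real^3)"
    using bilinear_cross bilinear_conv_bounded_bilinear by blast
  from bounded_bilinear.FDERIV[OF this smooth_on_has_derivative[OF assms, of "[False]"]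
      smooth_on_has_derivative[OF assms, of "[True]"]]
  show ?thesis
    unfolding chart_normal_def smooth_on_mixed_partials_eq[OF assms] by (simp add: add.commute)
qed

lemma mean_curvature_eq_0_iff:
  assumes "chart_normal F w \<noteq> 0"
  shows "mean_curvature F w = 0 \<longleftrightarrow>
    (Du F w \<bullet> Du F w) * (chart_normal F w \<bullet> Dvv F w) - 2 * (Du F w \<bullet> Dv F w) * (chart_normal F w \<bullet> Duv F w)
      + (Dv F w \<bullet> Dv F w) * (chart_normal F w \<bullet> Duu F w) = 0"
proof -
  define C where "C = chart_normal F w"
  have "mean_curvature F w = inverse (norm C) *
      ((Du F w \<bullet> Du F w) * (C \<bullet> Dvv F w) - 2 * (Du F w \<bullet> Dv F w) * (C \<bullet> Duv F w) + (Dv F w \<bullet> Dv F w) * (C \<bullet> Duu F w))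
      / (2 * ((Du F w \<bullet> Du F w) * (Dv F w \<bullet> Dv F w) - (Du F w \<bullet> Dv F w)^2))"
    unfolding mean_curvature_def Let_def C_def chart_normal_def
    by (simp add: inner_commute[of _ "cross3 (Du F w) (Dv F w)"] algebra_simps divide_inverse del: iterpd.simps)
  moreover have "(Du F w \<bullet> Du F w) * (Dv F w \<bullet> Dv F w) - (Du F w \<bullet> Dv F w)^2 > 0"
    using assms gram_det_pos unfolding chart_normal_def by blast
  ultimately show ?thesis
    using assms by (simp add: C_def)
qed

lemma tangent_affine_field_kernel:
  assumes "smooth_on W F" "open W" "open U" "w \<in> U" "U \<subseteq> W"
    and "\<And>z. z \<in> U \<Longrightarrow> (a + c *\<^sub>R F z) \<bullet> chart_normal F z = 0"
  shows "(a + c *\<^sub>R F w) \<bullet> (cross3 (Duu F w) (Dv F w) + cross3 (Du F w) (Duv F w)) = 0"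
    and "(a + c *\<^sub>R F w) \<bullet> (cross3 (Duv F w) (Dv F w) + cross3 (Du F w) (Dvv F w)) = 0"
proof -
  have w: "w \<in> W"
    using assms(4,5) by blast
  have "((\<lambda>z. a + c *\<^sub>R F z) has_derivative (\<lambda>h. c *\<^sub>R (fst h *\<^sub>R Du F w + snd h *\<^sub>R Dv F w))) (at w)"
    using chart_has_derivative[OF assms(1,2) w] by (auto intro!: derivative_eq_intros)
  from has_derivative_inner[OF this chart_normal_has_derivative[OF assms(1,2) w]]
  have "((\<lambda>z. (a + c *\<^sub>R F z) \<bullet> chart_normal F z) has_derivative (\<lambda>h.
      (a + c *\<^sub>R F w) \<bullet> (cross3 (fst h *\<^sub>R Duu F w + snd h *\<^sub>R Duv F w) (Dv F w)
        + cross3 (Du F w) (fst h *\<^sub>R Duv F w + snd h *\<^sub>R Dvv F w))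
      + (c *\<^sub>R (fst h *\<^sub>R Du F w + snd h *\<^sub>R Dv F w)) \<bullet> chart_normal F w)) (at w)"
    by simp
  moreover have "((\<lambda>z. (a + c *\<^sub>R F z) \<bullet> chart_normal F z) has_derivative (\<lambda>h. 0)) (at w)"
    by (rule has_derivative_transform_within_open[of "\<lambda>z. 0" _ _ _ U]) (use assms(3,4,6) in auto)
  ultimately have derivative_eq_0: "(\<lambda>h.
      (a + c *\<^sub>R F w) \<bullet> (cross3 (fst h *\<^sub>R Duu F w + snd h *\<^sub>R Duv F w) (Dv F w)
        + cross3 (Du F w) (fst h *\<^sub>R Duv F w + snd h *\<^sub>R Dvv F w))
      + (c *\<^sub>R (fst h *\<^sub>R Du F w + snd h *\<^sub>R Dv F w)) \<bullet> chart_normal F w) = (\<lambda>h. 0)"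
    by (rule has_derivative_unique)
  have tangent: "Du F w \<bullet> chart_normal F w = 0" "Dv F w \<bullet> chart_normal F w = 0"
    unfolding chart_normal_def by (simp_all add: dot_cross_self)
  from fun_cong[OF derivative_eq_0, of "(1, 0)"] fun_cong[OF derivative_eq_0, of "(0, 1)"]
  show "(a + c *\<^sub>R F w) \<bullet> (cross3 (Duu F w) (Dv F w) + cross3 (Du F w) (Duv F w)) = 0"
    and "(a + c *\<^sub>R F w) \<bullet> (cross3 (Duv F w) (Dv F w) + cross3 (Du F w) (Dvv F w)) = 0"
    using tangent by (simp_all add: inner_add_left)
qed

lemma totally_geodesic_at_of_tangent_affine_field:
  assumes "smooth_on W F" "open W" "open U" "w \<in> U" "U \<subseteq> W" "chart_normal F w \<noteq> 0"
    and "\<And>z. z \<in> U \<Longrightarrow> (a + c *\<^sub>R F z) \<bullet> chart_normal F z = 0"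
    and "a + c *\<^sub>R F w \<noteq> 0" "mean_curvature F w = 0"
  shows "totally_geodesic_at F w"
  using second_form_eq_0_of_kernel[of "Du F w" "Dv F w" "a + c *\<^sub>R F w" "Duu F w" "Duv F w" "Dvv F w"]
    tangent_affine_field_kernel[OF assms(1-5,7)] assms(4,6-9) mean_curvature_eq_0_iff[OF assms(6)]
  unfolding totally_geodesic_at_def chart_normal_def by blast

lemma halfplane_neighbourhood_contains_ball:
  assumes "open W" "w \<in> W \<inter> halfplane" "d > 0"
  obtains w1 \<rho> where "\<rho> > 0" "ball w1 \<rho> \<subseteq> W \<inter> halfplane" "ball w1 \<rho> \<subseteq> ball w d"
proof -
  obtain r where r: "r > 0" "ball w r \<subseteq> W"
    using assms(1,2) open_contains_ball by blast
  define \<rho> where "\<rho> = min r d / 2"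
  define w1 where "w1 = (fst w, snd w + \<rho>)"
  have "\<rho> > 0"
    using r assms(3) by (simp add: \<rho>_def)
  have "dist w1 w = \<rho>"
    using \<open>\<rho> > 0\<close> by (cases w) (simp add: w1_def dist_Pair_Pair dist_real_def)
  have "z \<in> W \<inter> halfplane \<and> z \<in> ball w d" if "z \<in> ball w1 \<rho>" for z
  proof -
    have "dist z w < 2 * \<rho>"
      using dist_triangle[of z w w1] that \<open>dist w1 w = \<rho>\<close> by (simp add: dist_commute)
    moreover have "\<bar>snd z - snd w1\<bar> < \<rho>"
      using that dist_snd_le[of z w1] by (simp add: dist_real_def dist_commute)
    then have "snd z > snd w"
      by (simp add: w1_def)
    ultimately show ?thesis
      using r assms(2) by (auto simp: \<rho>_def halfplane_def dist_commute)
  qed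
  with \<open>\<rho> > 0\<close> that show ?thesis by blast
qed

lemma chart_not_constant_on_ball:
  assumes "smooth_on W F" "open W" "\<rho> > 0" "ball w \<rho> \<subseteq> W" "chart_normal F w \<noteq> 0"
  shows "\<exists>z\<in>ball w \<rho>. F z \<noteq> K"
proof (rule ccontr)
  assume const: "\<not> (\<exists>z\<in>ball w \<rho>. F z \<noteq> K)"
  have "w \<in> W"
    using assms(3,4) by (simp add: subset_eq)
  have "(F has_derivative (\<lambda>h. 0)) (at w)"
    by (rule has_derivative_transform_within_open[of "\<lambda>z. K" _ _ _ "ball w \<rho>"]) (use assms(3) const in auto)
  then have "(\<lambda>h. fst h *\<^sub>R Du F w + snd h *\<^sub>R Dv F w) = (\<lambda>h. 0)"
    using has_derivative_unique chart_has_derivative[OF assms(1,2) \<open>w \<in> W\<close>] by blast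
  from fun_cong[OF this, of "(1, 0)"] have "Du F w = 0"
    by simp
  with assms(5) show False
    by (simp add: chart_normal_def)
qed

lemma chart_affine_field_not_vanishing_on_ball:
  assumes "smooth_on W F" "open W" "\<rho> > 0" "ball w \<rho> \<subseteq> W" "chart_normal F w \<noteq> 0" "a \<noteq> 0 \<or> c \<noteq> 0"
  shows "\<exists>z\<in>ball w \<rho>. a + c *\<^sub>R F z \<noteq> 0"
proof (rule ccontr)
  assume "\<not> (\<exists>z\<in>ball w \<rho>. a + c *\<^sub>R F z \<noteq> 0)"
  then have vanish: "c *\<^sub>R F z = - a" if "z \<in> ball w \<rho>" for z
    using that by (simp add: eq_neg_iff_add_eq_0 add.commute)
  have "c *\<^sub>R F w = - a"
    using vanish assms(3) by simp
  then have "c \<noteq> 0"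
    using assms(6) by auto
  have "F z = - (1 / c) *\<^sub>R a" if "z \<in> ball w \<rho>" for z
  proof -
    have "F z = (1 / c) *\<^sub>R (c *\<^sub>R F z)"
      using \<open>c \<noteq> 0\<close> by simp
    with vanish[OF that] show ?thesis
      by simp
  qed
  with chart_not_constant_on_ball[OF assms(1-5)] show False
    by blast
qed

lemma not_totally_geodesic_near:
  assumes "smooth_on W F" "w \<in> W" "\<not> totally_geodesic_at F w"
  obtains d where "d > 0" "\<And>z. z \<in> W \<Longrightarrow> dist z w < d \<Longrightarrow> \<not> totally_geodesic_at F z"
proof -
  define q where "q z = \<bar>chart_normal F z \<bullet> Duu F z\<bar> + \<bar>chart_normal F z \<bullet> Duv F z\<bar>
    + \<bar>chart_normal F z \<bullet> Dvv F z\<bar>" for z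
  have q_eq_0: "q z = 0 \<longleftrightarrow> totally_geodesic_at F z" for z
    unfolding q_def totally_geodesic_at_def by (simp add: add_nonneg_eq_0_iff)
  have "q w \<ge> 0"
    unfolding q_def by simp
  with assms(3) q_eq_0[of w] have "q w > 0"
    by simp
  have "continuous_on W q"
    unfolding q_def
    by (intro continuous_on_add continuous_on_rabs continuous_on_inner
        chart_normal_continuous_on[OF assms(1)] smooth_on_continuous_on[OF assms(1)])
  then have "\<forall>e>0. \<exists>d>0. \<forall>z\<in>W. dist z w < d \<longrightarrow> dist (q z) (q w) < e"
    using assms(2) by (rule continuous_on_iff[THEN iffD1, THEN bspec])
  from this[rule_format, OF \<open>q w > 0\<close>]
  obtain d where d: "d > 0" "\<forall>z\<in>W. dist z w < d \<longrightarrow> dist (q z) (q w) < q w"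
    by blast
  show ?thesis
  proof (rule that[OF d(1)])
    fix z assume "z \<in> W" "dist z w < d"
    with d(2) have "dist (q z) (q w) < q w"
      by blast
    then show "\<not> totally_geodesic_at F z"
      using q_eq_0[of z] by (auto simp: dist_real_def)
  qed
qed

text \<open>Where a + c F does not vanish, the second fundamental form vanishes pointwise; if it did not
  vanish at w, it would not vanish on a whole half-disc near w, so a + c F would vanish there,
  which is impossible for an immersion.\<close>
lemma totally_geodesic_of_tangent_affine_field:
  assumes "smooth_on W F" "open W" "\<And>z. z \<in> W \<Longrightarrow> chart_normal F z \<noteq> 0"
    and "\<And>z. z \<in> W \<inter> halfplane \<Longrightarrow> (a + c *\<^sub>R F z) \<bullet> chart_normal F z = 0"
    and "\<And>z. z \<in> W \<inter> halfplane \<Longrightarrow> mean_curvature F z = 0"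
    and "a \<noteq> 0 \<or> c \<noteq> 0" "w \<in> W \<inter> halfplane"
  shows "totally_geodesic_at F w"
proof (rule ccontr)
  assume not_geodesic: "\<not> totally_geodesic_at F w"
  have "w \<in> W"
    using assms(7) by blast
  obtain d where "d > 0" and d: "\<And>z. z \<in> W \<Longrightarrow> dist z w < d \<Longrightarrow> \<not> totally_geodesic_at F z"
    by (rule not_totally_geodesic_near[OF assms(1) \<open>w \<in> W\<close> not_geodesic]) (rule that)
  obtain w1 \<rho> where \<rho>: "\<rho> > 0" "ball w1 \<rho> \<subseteq> W \<inter> halfplane" "ball w1 \<rho> \<subseteq> ball w d"
    by (rule halfplane_neighbourhood_contains_ball[OF assms(2,7) \<open>d > 0\<close>])
  have "ball w1 \<rho> \<subseteq> W" "w1 \<in> W"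
    using \<rho>(1,2) by auto
  then obtain z where z: "z \<in> ball w1 \<rho>" "a + c *\<^sub>R F z \<noteq> 0"
    using chart_affine_field_not_vanishing_on_ball[OF assms(1,2) \<rho>(1) _ assms(3) assms(6)] by blast
  then have "z \<in> W" "z \<in> halfplane" "dist z w < d"
    using \<rho>(2,3) by (auto simp: dist_commute)
  have "totally_geodesic_at F z"
  proof (rule totally_geodesic_at_of_tangent_affine_field[OF assms(1,2) open_ball z(1) \<open>ball w1 \<rho> \<subseteq> W\<close>])
    show "chart_normal F z \<noteq> 0"
      using assms(3) \<open>z \<in> W\<close> .
    show "(a + c *\<^sub>R F y) \<bullet> chart_normal F y = 0" if "y \<in> ball w1 \<rho>" for y
      using assms(4) that \<rho>(2) by blast
    show "mean_curvature F z = 0"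
      using assms(5) \<open>z \<in> W\<close> \<open>z \<in> halfplane\<close> by blast
  qed (rule z(2))
  with d[OF \<open>z \<in> W\<close> \<open>dist z w < d\<close>] show False
    by contradiction
qed

lemma sgn_has_derivative_zero:
  fixes g :: "'a::real_normed_vector \<Rightarrow> real^3"
  assumes "(g has_derivative g') (at w)" "g w \<noteq> 0" "\<And>h. cross3 (g w) (g' h) = 0"
  shows "((\<lambda>z. sgn (g z)) has_derivative (\<lambda>h. 0)) (at w)"
proof -
  define n where "n = norm (g w)"
  have "n > 0"
    using assms(2) by (simp add: n_def)
  have "((\<lambda>z. norm (g z)) has_derivative (\<lambda>h. g' h \<bullet> sgn (g w))) (at w)"
    using has_derivative_compose[OF assms(1) has_derivative_norm[OF assms(2)]] by (simp add: o_def)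
  from has_derivative_scaleR[OF Deriv.has_derivative_inverse[OF _ this] assms(1)] assms(2)
  have "((\<lambda>z. sgn (g z)) has_derivative (\<lambda>h. inverse n *\<^sub>R g' h
      - (inverse n * (g' h \<bullet> sgn (g w)) * inverse n) *\<^sub>R g w)) (at w)"
    by (simp add: sgn_div_norm n_def)
  moreover have "inverse n *\<^sub>R g' h - (inverse n * (g' h \<bullet> sgn (g w)) * inverse n) *\<^sub>R g w = 0" for h
  proof -
    define \<mu> where "\<mu> = (g w \<bullet> g' h) / n^2"
    have gg: "g w \<bullet> g w = n^2"
      by (simp add: n_def power2_norm_eq_inner)
    have "(g w \<bullet> g w) *\<^sub>R g' h = (g w \<bullet> g' h) *\<^sub>R g w"
      using cross3_triple_expansion[of "g w" "g w" "g' h"] assms(3)[of h] by simp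
    moreover have "g' h = inverse (n^2) *\<^sub>R ((g w \<bullet> g w) *\<^sub>R g' h)"
      using \<open>n > 0\<close> gg by simp
    ultimately have "g' h = \<mu> *\<^sub>R g w"
      by (simp add: \<mu>_def divide_inverse mult.commute)
    moreover have "sgn (g w) = inverse n *\<^sub>R g w"
      by (simp add: sgn_div_norm n_def)
    ultimately show ?thesis
      using \<open>n > 0\<close> gg by (simp add: power2_eq_square)
  qed
  ultimately show ?thesis
    by simp
qed

lemma sgn_chart_normal_has_derivative_zero:
  assumes "smooth_on W F" "open W" "w \<in> W" "chart_normal F w \<noteq> 0" "totally_geodesic_at F w"
  shows "((\<lambda>z. sgn (chart_normal F z)) has_derivative (\<lambda>h. 0)) (at w)"
proof (rule sgn_has_derivative_zero[OF chart_normal_has_derivative[OF assms(1-3)] assms(4)])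
  fix h :: "real \<times> real"
  define C X Y where "C = chart_normal F w"
    and "X = fst h *\<^sub>R Duu F w + snd h *\<^sub>R Duv F w" and "Y = fst h *\<^sub>R Duv F w + snd h *\<^sub>R Dvv F w"
  have "C \<bullet> X = 0" "C \<bullet> Y = 0"
    using assms(5) unfolding totally_geodesic_at_def C_def X_def Y_def by (simp_all add: inner_add_right)
  moreover have "C \<bullet> Du F w = 0" "C \<bullet> Dv F w = 0"
    unfolding C_def chart_normal_def by (simp_all add: dot_cross_self)
  ultimately show "cross3 (chart_normal F w) (cross3 X (Dv F w) + cross3 (Du F w) Y) = 0"
    unfolding C_def[symmetric] cross_add_right cross3_triple_expansion by simp
qed

lemma chart_support_has_derivative_zero:
  assumes "smooth_on W F" "open W" "w \<in> W" "chart_normal F w \<noteq> 0" "totally_geodesic_at F w"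
  shows "((\<lambda>z. F z \<bullet> sgn (chart_normal F z)) has_derivative (\<lambda>h. 0)) (at w)"
proof -
  from has_derivative_inner[OF chart_has_derivative[OF assms(1-3)] sgn_chart_normal_has_derivative_zero[OF assms]]
  have "((\<lambda>z. F z \<bullet> sgn (chart_normal F z)) has_derivative
      (\<lambda>h. (fst h *\<^sub>R Du F w + snd h *\<^sub>R Dv F w) \<bullet> sgn (chart_normal F w))) (at w)"
    by simp
  moreover have "(\<lambda>h. (fst h *\<^sub>R Du F w + snd h *\<^sub>R Dv F w) \<bullet> sgn (chart_normal F w)) = (\<lambda>h. 0)"
    by (simp add: sgn_div_norm chart_normal_def dot_cross_self inner_add_left del: iterpd.simps)
  ultimately show ?thesis
    by simp
qed

lemma convex_halfplane: "convex halfplane"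
  unfolding halfplane_def convex_def by auto

lemma totally_geodesic_chart_locally_planar:
  assumes "smooth_on W F" "open W" "\<And>z. z \<in> W \<Longrightarrow> chart_normal F z \<noteq> 0"
    and "\<And>z. z \<in> W \<inter> halfplane \<Longrightarrow> totally_geodesic_at F z" "w \<in> W"
  obtains r n k where "r > 0" "ball w r \<subseteq> W"
    "\<And>z. z \<in> ball w r \<inter> halfplane \<Longrightarrow> sgn (chart_normal F z) = n \<and> F z \<bullet> n = k"
proof -
  obtain r where r: "r > 0" "ball w r \<subseteq> W"
    using assms(2,5) open_contains_ball by blast
  define S where "S = ball w r \<inter> halfplane"
  have "convex S"
    unfolding S_def by (intro convex_Int convex_ball convex_halfplane)
  have sgn_deriv: "((\<lambda>z. sgn (chart_normal F z)) has_derivative (\<lambda>h. 0)) (at z within S)"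
    and support_deriv: "((\<lambda>z. F z \<bullet> sgn (chart_normal F z)) has_derivative (\<lambda>h. 0)) (at z within S)"
    if "z \<in> S" for z
  proof -
    have "z \<in> W" "z \<in> W \<inter> halfplane"
      using that r unfolding S_def by blast+
    note geodesic = assms(1,2) \<open>z \<in> W\<close> assms(3)[OF \<open>z \<in> W\<close>] assms(4)[OF \<open>z \<in> W \<inter> halfplane\<close>]
    show "((\<lambda>z. sgn (chart_normal F z)) has_derivative (\<lambda>h. 0)) (at z within S)"
      by (rule has_derivative_at_withinI[OF sgn_chart_normal_has_derivative_zero[OF geodesic]])
    show "((\<lambda>z. F z \<bullet> sgn (chart_normal F z)) has_derivative (\<lambda>h. 0)) (at z within S)"
      by (rule has_derivative_at_withinI[OF chart_support_has_derivative_zero[OF geodesic]])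
  qed
  obtain n where n: "\<forall>z\<in>S. sgn (chart_normal F z) = n"
    using has_derivative_zero_constant[OF \<open>convex S\<close> sgn_deriv] by blast
  obtain k where k: "\<forall>z\<in>S. F z \<bullet> sgn (chart_normal F z) = k"
    using has_derivative_zero_constant[OF \<open>convex S\<close> support_deriv] by blast
  show ?thesis
  proof (rule that[OF r])
    fix z assume "z \<in> ball w r \<inter> halfplane"
    then have "sgn (chart_normal F z) = n" "F z \<bullet> sgn (chart_normal F z) = k"
      using n k unfolding S_def by blast+
    then show "sgn (chart_normal F z) = n \<and> F z \<bullet> n = k"
      by simp
  qed
qed

section \<open>Charts of a free boundary solution\<close>

lemma
  assumes "local_param M X p W \<psi> F"
  shows local_param_open: "open W"
    and local_param_center: "p \<in> \<psi> ` (W \<inter> halfplane)"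
    and local_param_homeomorphism: "\<exists>g. homeomorphism (W \<inter> halfplane) (\<psi> ` (W \<inter> halfplane)) \<psi> g"
    and local_param_openin: "openin (top_of_set M) (\<psi> ` (W \<inter> halfplane))"
    and local_param_smooth: "smooth_on W F"
    and local_param_eq: "\<And>w. w \<in> W \<inter> halfplane \<Longrightarrow> X (\<psi> w) = F w"
    and local_param_immersion: "\<And>w. w \<in> W \<Longrightarrow> chart_normal F w \<noteq> 0"
    and local_param_in: "\<And>w. w \<in> W \<inter> halfplane \<Longrightarrow> \<psi> w \<in> M"
proof -
  show "\<And>w. w \<in> W \<inter> halfplane \<Longrightarrow> \<psi> w \<in> M"
    using assms openin_subset[of "top_of_set M" "\<psi> ` (W \<inter> halfplane)"] unfolding local_param_def by auto
qed (use assms in \<open>auto simp: local_param_def chart_normal_def\<close>)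

lemma
  assumes "free_boundary_solution M X"
  shows free_boundary_solution_chart: "p \<in> M \<Longrightarrow> \<exists>W \<psi> F. local_param M X p W \<psi> F"
    and free_boundary_solution_immersed: "immersed_surface M X"
    and free_boundary_solution_nonempty: "M \<noteq> {}"
    and free_boundary_solution_compact: "compact M"
    and free_boundary_solution_connected: "connected M"
    and free_boundary_solution_in_ball: "p \<in> M \<Longrightarrow> norm (X p) \<le> 1"
    and free_boundary_solution_boundary: "p \<in> M \<Longrightarrow> norm (X p) = 1 \<longleftrightarrow> p \<in> surface_boundary M X"
    and free_boundary_solution_minimal:
      "local_param M X p W \<psi> F \<Longrightarrow> w \<in> W \<inter> halfplane \<Longrightarrow> mean_curvature F w = 0"
  using assms unfolding free_boundary_solution_def immersed_surface_def minimal_surface_def by blast+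

lemma unit_normal_in_chart:
  assumes "unit_normal M X \<nu>" "local_param M X p W \<psi> F" "z \<in> W \<inter> halfplane"
  shows "\<nu> (\<psi> z) \<bullet> Du F z = 0" "\<nu> (\<psi> z) \<bullet> Dv F z = 0"
    and "\<nu> (\<psi> z) = (\<nu> (\<psi> z) \<bullet> sgn (chart_normal F z)) *\<^sub>R sgn (chart_normal F z)"
    and "\<bar>\<nu> (\<psi> z) \<bullet> sgn (chart_normal F z)\<bar> = 1"
proof -
  show orth: "\<nu> (\<psi> z) \<bullet> Du F z = 0" "\<nu> (\<psi> z) \<bullet> Dv F z = 0"
    using assms unfolding unit_normal_def by blast+
  have "z \<in> W"
    using assms(3) by blast
  show eq: "\<nu> (\<psi> z) = (\<nu> (\<psi> z) \<bullet> sgn (chart_normal F z)) *\<^sub>R sgn (chart_normal F z)"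
    using orthogonal_cross3_eq_sgn[OF _ orth] local_param_immersion[OF assms(2) \<open>z \<in> W\<close>]
    unfolding chart_normal_def by blast
  have "norm (\<nu> (\<psi> z)) = 1"
    using assms(1) local_param_in[OF assms(2,3)] unfolding unit_normal_def by blast
  moreover have "norm (sgn (chart_normal F z)) = 1"
    using local_param_immersion[OF assms(2) \<open>z \<in> W\<close>] by (simp add: norm_sgn)
  moreover have "norm (\<nu> (\<psi> z)) = norm ((\<nu> (\<psi> z) \<bullet> sgn (chart_normal F z)) *\<^sub>R sgn (chart_normal F z))"
    using eq by (rule arg_cong)
  ultimately show "\<bar>\<nu> (\<psi> z) \<bullet> sgn (chart_normal F z)\<bar> = 1"
    by simp
qed

lemma tangent_affine_field_in_chart:
  assumes "unit_normal M X \<nu>" "local_param M X p W \<psi> F" "z \<in> W \<inter> halfplane"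
    and "\<And>q. q \<in> M \<Longrightarrow> a \<bullet> \<nu> q + c * (X q \<bullet> \<nu> q) = 0"
  shows "(a + c *\<^sub>R F z) \<bullet> chart_normal F z = 0"
proof -
  define s where "s = \<nu> (\<psi> z) \<bullet> sgn (chart_normal F z)"
  have "z \<in> W"
    using assms(3) by blast
  have "s \<noteq> 0" "chart_normal F z \<noteq> 0"
    using unit_normal_in_chart(4)[OF assms(1-3)] local_param_immersion[OF assms(2) \<open>z \<in> W\<close>]
    by (auto simp: s_def)
  have "\<nu> (\<psi> z) = (s * inverse (norm (chart_normal F z))) *\<^sub>R chart_normal F z"
    using unit_normal_in_chart(3)[OF assms(1-3)] by (simp add: s_def sgn_div_norm)
  moreover have "(a + c *\<^sub>R F z) \<bullet> \<nu> (\<psi> z) = 0"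
    using assms(4)[OF local_param_in[OF assms(2,3)]] local_param_eq[OF assms(2,3)]
    by (simp add: inner_add_left)
  ultimately show ?thesis
    using \<open>s \<noteq> 0\<close> \<open>chart_normal F z \<noteq> 0\<close> by simp
qed

lemma chart_image_openin:
  assumes "local_param M X p W \<psi> F" "openin (top_of_set (W \<inter> halfplane)) S"
  shows "openin (top_of_set M) (\<psi> ` S)"
proof -
  obtain g where "homeomorphism (W \<inter> halfplane) (\<psi> ` (W \<inter> halfplane)) \<psi> g"
    using local_param_homeomorphism[OF assms(1)] by blast
  from homeomorphism_imp_open_map[OF this assms(2)]
  show ?thesis
    using openin_trans local_param_openin[OF assms(1)] by blast
qed

lemma unit_normal_continuous_in_chart:
  assumes "unit_normal M X \<nu>" "local_param M X p W \<psi> F"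
  shows "continuous_on (W \<inter> halfplane) (\<lambda>z. \<nu> (\<psi> z))"
proof -
  obtain g where "homeomorphism (W \<inter> halfplane) (\<psi> ` (W \<inter> halfplane)) \<psi> g"
    using local_param_homeomorphism[OF assms(2)] by blast
  then have "continuous_on (W \<inter> halfplane) \<psi>"
    by (rule homeomorphism_cont1)
  moreover have "continuous_on M \<nu>"
    using assms(1) unfolding unit_normal_def by blast
  moreover have "\<psi> ` (W \<inter> halfplane) \<subseteq> M"
    using local_param_in[OF assms(2)] by blast
  ultimately have "continuous_on (W \<inter> halfplane) (\<nu> \<circ> \<psi>)"
    using continuous_on_compose[of "W \<inter> halfplane" \<psi> \<nu>] continuous_on_subset[of M \<nu> "\<psi> ` (W \<inter> halfplane)"]
    by blast
  then show ?thesis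
    by (simp add: o_def)
qed

lemma unit_normal_constant_on_planar_piece:
  assumes "unit_normal M X \<nu>" "local_param M X p W \<psi> F" "S \<subseteq> W \<inter> halfplane" "connected S"
    and "\<And>z. z \<in> S \<Longrightarrow> sgn (chart_normal F z) = n"
  obtains \<sigma> where "\<And>z. z \<in> S \<Longrightarrow> \<nu> (\<psi> z) = \<sigma> *\<^sub>R n"
proof -
  define \<sigma> where "\<sigma> z = \<nu> (\<psi> z) \<bullet> n" for z
  have in_chart: "z \<in> W \<inter> halfplane" if "z \<in> S" for z
    using assms(3) that by blast
  have eq: "\<nu> (\<psi> z) = \<sigma> z *\<^sub>R n" if "z \<in> S" for z
    using unit_normal_in_chart(3)[OF assms(1,2) in_chart[OF that]] assms(5)[OF that] by (simp add: \<sigma>_def)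
  have "\<bar>\<sigma> z\<bar> = 1" if "z \<in> S" for z
    using unit_normal_in_chart(4)[OF assms(1,2) in_chart[OF that]] assms(5)[OF that] by (simp add: \<sigma>_def)
  then have "\<sigma> ` S \<subseteq> {1, -1}"
    by fastforce
  then have "finite (\<sigma> ` S)"
    by (rule finite_subset) simp
  moreover have "continuous_on S \<sigma>"
    unfolding \<sigma>_def
    by (intro continuous_on_inner continuous_on_const continuous_on_subset[OF
          unit_normal_continuous_in_chart[OF assms(1,2)] assms(3)])
  ultimately have "\<sigma> constant_on S"
    by (rule continuous_finite_range_constant[OF assms(4), rotated])
  then obtain \<sigma>0 where \<sigma>0: "\<forall>z\<in>S. \<sigma> z = \<sigma>0"
    unfolding constant_on_def by blast
  show ?thesis
  proof (rule that)
    fix z assume "z \<in> S"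
    then show "\<nu> (\<psi> z) = \<sigma>0 *\<^sub>R n"
      using eq \<sigma>0 by simp
  qed
qed

lemma locally_constant_normal_and_support:
  assumes "free_boundary_solution M X" "unit_normal M X \<nu>"
    and rel: "\<And>q. q \<in> M \<Longrightarrow> a \<bullet> \<nu> q + c * (X q \<bullet> \<nu> q) = 0" and "a \<noteq> 0 \<or> c \<noteq> 0" and "p \<in> M"
  obtains T where "openin (top_of_set M) T" "p \<in> T" "\<And>q. q \<in> T \<Longrightarrow> \<nu> q = \<nu> p \<and> X q \<bullet> \<nu> q = X p \<bullet> \<nu> p"
proof -
  obtain W \<psi> F where chart: "local_param M X p W \<psi> F"
    using free_boundary_solution_chart[OF assms(1,5)] by blast
  note smooth = local_param_smooth[OF chart] local_param_open[OF chart] local_param_immersion[OF chart]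
  obtain w0 where w0: "w0 \<in> W \<inter> halfplane" "p = \<psi> w0"
    using local_param_center[OF chart] by blast
  have "totally_geodesic_at F z" if "z \<in> W \<inter> halfplane" for z
    by (rule totally_geodesic_of_tangent_affine_field[OF smooth tangent_affine_field_in_chart[OF assms(2) chart _ rel]
          free_boundary_solution_minimal[OF assms(1) chart] assms(4) that])
  then obtain r n k where r: "r > 0" "ball w0 r \<subseteq> W"
    and planar: "\<And>z. z \<in> ball w0 r \<inter> halfplane \<Longrightarrow> sgn (chart_normal F z) = n \<and> F z \<bullet> n = k"
    using totally_geodesic_chart_locally_planar[OF smooth] w0(1) by blast
  define S where "S = ball w0 r \<inter> halfplane"
  have "S \<subseteq> W \<inter> halfplane" "w0 \<in> S" "S = (W \<inter> halfplane) \<inter> ball w0 r"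
    using r w0(1) by (auto simp: S_def)
  moreover have "connected S"
    unfolding S_def by (intro convex_connected convex_Int convex_ball convex_halfplane)
  ultimately obtain \<sigma> where \<sigma>: "\<And>z. z \<in> S \<Longrightarrow> \<nu> (\<psi> z) = \<sigma> *\<^sub>R n"
    using unit_normal_constant_on_planar_piece[OF assms(2) chart] planar unfolding S_def by metis
  have const: "\<nu> (\<psi> z) = \<sigma> *\<^sub>R n" "X (\<psi> z) \<bullet> \<nu> (\<psi> z) = \<sigma> * k" if "z \<in> S" for z
  proof -
    have "z \<in> ball w0 r \<inter> halfplane" "z \<in> W \<inter> halfplane"
      using that \<open>S \<subseteq> W \<inter> halfplane\<close> unfolding S_def by auto
    then show "\<nu> (\<psi> z) = \<sigma> *\<^sub>R n" "X (\<psi> z) \<bullet> \<nu> (\<psi> z) = \<sigma> * k"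
      using \<sigma>[OF that] planar[of z] local_param_eq[OF chart, of z] by simp_all
  qed
  have "openin (top_of_set (W \<inter> halfplane)) S"
    using \<open>S = (W \<inter> halfplane) \<inter> ball w0 r\<close> by (simp add: openin_open_Int)
  then have "openin (top_of_set M) (\<psi> ` S)"
    by (rule chart_image_openin[OF chart])
  moreover have "p \<in> \<psi> ` S"
    using \<open>w0 \<in> S\<close> w0(2) by blast
  moreover have "\<nu> q = \<nu> p \<and> X q \<bullet> \<nu> q = X p \<bullet> \<nu> p" if q_image: "q \<in> \<psi> ` S" for q
  proof -
    obtain z where "z \<in> S" "q = \<psi> z"
      using q_image by blast
    then have "\<nu> q = \<sigma> *\<^sub>R n" "\<nu> p = \<sigma> *\<^sub>R n" "X q \<bullet> \<nu> q = \<sigma> * k" "X p \<bullet> \<nu> p = \<sigma> * k"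
      using const[OF \<open>z \<in> S\<close>] const[OF \<open>w0 \<in> S\<close>] w0(2) by simp_all
    then show ?thesis
      by metis
  qed
  ultimately show ?thesis
    by (rule that)
qed

lemma constant_normal_and_support:
  assumes "free_boundary_solution M X" "unit_normal M X \<nu>"
    and "\<And>q. q \<in> M \<Longrightarrow> a \<bullet> \<nu> q + c * (X q \<bullet> \<nu> q) = 0" and "a \<noteq> 0 \<or> c \<noteq> 0"
  shows "\<nu> constant_on M" and "(\<lambda>q. X q \<bullet> \<nu> q) constant_on M"
proof -
  note connected = free_boundary_solution_connected[OF assms(1)]
  have normal_local: "\<exists>T. openin (top_of_set M) T \<and> p \<in> T \<and> (\<forall>q\<in>T. \<nu> q = \<nu> p)"
    and support_local: "\<exists>T. openin (top_of_set M) T \<and> p \<in> T \<and> (\<forall>q\<in>T. X q \<bullet> \<nu> q = X p \<bullet> \<nu> p)"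
    if p_in: "p \<in> M" for p
  proof -
    obtain T where T: "openin (top_of_set M) T" "p \<in> T"
      "\<And>q. q \<in> T \<Longrightarrow> \<nu> q = \<nu> p \<and> X q \<bullet> \<nu> q = X p \<bullet> \<nu> p"
      using locally_constant_normal_and_support[OF assms p_in] by metis
    have "\<forall>q\<in>T. \<nu> q = \<nu> p" "\<forall>q\<in>T. X q \<bullet> \<nu> q = X p \<bullet> \<nu> p"
      using T(3) by blast+
    with T(1,2) show "\<exists>T. openin (top_of_set M) T \<and> p \<in> T \<and> (\<forall>q\<in>T. \<nu> q = \<nu> p)"
      and "\<exists>T. openin (top_of_set M) T \<and> p \<in> T \<and> (\<forall>q\<in>T. X q \<bullet> \<nu> q = X p \<bullet> \<nu> p)"
      by blast+
  qed
  show "\<nu> constant_on M"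
    using normal_local by (rule locally_constant_imp_constant[OF connected])
  show "(\<lambda>q. X q \<bullet> \<nu> q) constant_on M"
    using support_local by (rule locally_constant_imp_constant[OF connected])
qed

section \<open>Planar solutions are plane disks\<close>

lemma immersed_surface_continuous:
  assumes "immersed_surface M X"
  shows "continuous_on M X"
proof -
  have "continuous (at p within M) X" if p_in: "p \<in> M" for p
  proof -
    obtain W \<psi> F where chart: "local_param M X p W \<psi> F"
      using assms p_in unfolding immersed_surface_def by blast
    define T where "T = \<psi> ` (W \<inter> halfplane)"
    obtain g where hom: "homeomorphism (W \<inter> halfplane) T \<psi> g"
      using local_param_homeomorphism[OF chart] unfolding T_def by blast
    have "continuous_on (W \<inter> halfplane) F"
      using smooth_on_continuous_on[OF local_param_smooth[OF chart], of "[]"] continuous_on_subset by fastforce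
    then have "continuous_on T (F \<circ> g)"
      using continuous_on_compose[OF homeomorphism_cont2[OF hom]] homeomorphism_image2[OF hom] by simp
    moreover have "(F \<circ> g) q = X q" if q_in: "q \<in> T" for q
    proof -
      obtain w where "w \<in> W \<inter> halfplane" "q = \<psi> w"
        using q_in unfolding T_def by blast
      then show ?thesis
        using homeomorphism_apply1[OF hom] local_param_eq[OF chart] by simp
    qed
    ultimately have "continuous_on T X"
      by (rule continuous_on_eq)
    moreover have "p \<in> T"
      using local_param_center[OF chart] unfolding T_def .
    moreover obtain U where "open U" "T = M \<inter> U"
      using local_param_openin[OF chart] unfolding T_def openin_open by blast
    ultimately have "continuous (at p within T) X" "at p within T = at p within M"
      using continuous_on_eq_continuous_within at_within_nhd[of p U T M] by blast+
    then show ?thesis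
      by simp
  qed
  then show ?thesis
    using continuous_on_eq_continuous_within by blast
qed

lemma chart_orthogonal_of_constant_norm:
  assumes "smooth_on W F" "open W" "open U" "w \<in> U" "U \<subseteq> W" "\<And>z. z \<in> U \<Longrightarrow> F z \<bullet> F z = 1"
  shows "F w \<bullet> Du F w = 0" "F w \<bullet> Dv F w = 0"
proof -
  have "w \<in> W"
    using assms(4,5) by blast
  note dF = chart_has_derivative[OF assms(1,2) this]
  have "((\<lambda>z. F z \<bullet> F z) has_derivative (\<lambda>h. 0)) (at w)"
    by (rule has_derivative_transform_within_open[of "\<lambda>z. 1" _ _ _ U]) (use assms(3,4,6) in auto)
  from has_derivative_unique[OF has_derivative_inner[OF dF dF] this]
  have "(\<lambda>h. F w \<bullet> (fst h *\<^sub>R Du F w + snd h *\<^sub>R Dv F w) + (fst h *\<^sub>R Du F w + snd h *\<^sub>R Dv F w) \<bullet> F w)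
    = (\<lambda>h. 0)" .
  from fun_cong[OF this, of "(1, 0)"] fun_cong[OF this, of "(0, 1)"]
  show "F w \<bullet> Du F w = 0" "F w \<bullet> Dv F w = 0"
    by (simp_all add: inner_commute)
qed

lemma free_boundary_solution_chart_ball:
  assumes "free_boundary_solution M X"
  obtains p W \<psi> F w \<rho> where "local_param M X p W \<psi> F" "\<rho> > 0" "ball w \<rho> \<subseteq> W \<inter> halfplane"
proof -
  obtain p where "p \<in> M"
    using free_boundary_solution_nonempty[OF assms] by blast
  then obtain W \<psi> F where chart: "local_param M X p W \<psi> F"
    using free_boundary_solution_chart[OF assms] by blast
  then obtain w0 where "w0 \<in> W \<inter> halfplane"
    using local_param_center by blast
  then obtain w \<rho> where "\<rho> > 0" "ball w \<rho> \<subseteq> W \<inter> halfplane" "ball w \<rho> \<subseteq> ball w0 1"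
    by (rule halfplane_neighbourhood_contains_ball[OF local_param_open[OF chart] _ zero_less_one])
  with chart show ?thesis
    using that by blast
qed

text \<open>For |k0| \<ge> 1 the plane meets the closed ball in at most one point, so a chart would be
  constant.\<close>
lemma planar_solution_level_lt_1:
  assumes "free_boundary_solution M X"
    and "\<And>q. q \<in> M \<Longrightarrow> X q \<bullet> n0 = k0" "norm n0 = 1"
  shows "\<bar>k0\<bar> < 1"
proof (rule ccontr)
  assume "\<not> \<bar>k0\<bar> < 1"
  then have "1 \<le> \<bar>k0\<bar>^2"
    using power_mono[of 1 "\<bar>k0\<bar>" 2] by simp
  have X_const: "X q = k0 *\<^sub>R n0" if "q \<in> M" for q
  proof -
    have "n0 \<bullet> n0 = 1" "n0 \<bullet> X q = k0" "X q \<bullet> n0 = k0"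
      using assms(2)[OF that] assms(3) by (simp_all add: norm_eq_1 inner_commute)
    then have "(X q - k0 *\<^sub>R n0) \<bullet> (X q - k0 *\<^sub>R n0) = X q \<bullet> X q - \<bar>k0\<bar>^2"
      by (simp add: inner_diff_left inner_diff_right power2_eq_square)
    moreover have "X q \<bullet> X q \<le> 1"
      using free_boundary_solution_in_ball[OF assms(1) that]
      by (simp add: power2_norm_eq_inner[symmetric] power_le_one)
    ultimately have "(X q - k0 *\<^sub>R n0) \<bullet> (X q - k0 *\<^sub>R n0) = 0"
      using \<open>1 \<le> \<bar>k0\<bar>^2\<close> inner_ge_zero[of "X q - k0 *\<^sub>R n0"] by linarith
    then show ?thesis
      by simp
  qed
  obtain p W \<psi> F w \<rho> where chart: "local_param M X p W \<psi> F" and \<rho>: "\<rho> > 0" "ball w \<rho> \<subseteq> W \<inter> halfplane"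
    by (rule free_boundary_solution_chart_ball[OF assms(1)])
  have "F z = k0 *\<^sub>R n0" if "z \<in> ball w \<rho>" for z
  proof -
    have "z \<in> W \<inter> halfplane"
      using that \<rho>(2) by blast
    then show ?thesis
      using X_const local_param_in[OF chart] local_param_eq[OF chart] by metis
  qed
  moreover have "ball w \<rho> \<subseteq> W" "w \<in> W"
    using \<rho> by auto
  moreover from this(2) have "chart_normal F w \<noteq> 0"
    by (rule local_param_immersion[OF chart])
  ultimately show False
    using chart_not_constant_on_ball[OF local_param_smooth[OF chart] local_param_open[OF chart] \<rho>(1)] by blast
qed

text \<open>If the image lay on the sphere, the position vector would be normal to the surface, hence
  equal to \<plusminus>n0, forcing |k0| = 1.\<close>
lemma planar_solution_has_interior_point:
  assumes "free_boundary_solution M X" "unit_normal M X \<nu>"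
    and "\<And>q. q \<in> M \<Longrightarrow> \<nu> q = n0" "\<And>q. q \<in> M \<Longrightarrow> X q \<bullet> n0 = k0" "norm n0 = 1"
  shows "\<exists>p\<in>M. norm (X p) < 1"
proof (rule ccontr)
  assume "\<not> (\<exists>p\<in>M. norm (X p) < 1)"
  then have sphere: "norm (X q) = 1" if "q \<in> M" for q
    using free_boundary_solution_in_ball[OF assms(1) that] that by force
  obtain p W \<psi> F w \<rho> where chart: "local_param M X p W \<psi> F" and \<rho>: "\<rho> > 0" "ball w \<rho> \<subseteq> W \<inter> halfplane"
    by (rule free_boundary_solution_chart_ball[OF assms(1)])
  have w: "w \<in> W \<inter> halfplane" "w \<in> ball w \<rho>" "ball w \<rho> \<subseteq> W"
    using \<rho> by auto
  have unit_sphere: "F z \<bullet> F z = 1" if "z \<in> ball w \<rho>" for z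
  proof -
    have "z \<in> W \<inter> halfplane"
      using that \<rho>(2) by blast
    then show ?thesis
      using sphere[OF local_param_in[OF chart]] local_param_eq[OF chart] by (simp add: norm_eq_1)
  qed
  note chart_orthogonal_of_constant_norm[OF local_param_smooth[OF chart] local_param_open[OF chart] open_ball
      w(2,3) unit_sphere]
  moreover have "n0 \<bullet> Du F w = 0" "n0 \<bullet> Dv F w = 0"
    using unit_normal_in_chart(1,2)[OF assms(2) chart w(1)] assms(3)[OF local_param_in[OF chart w(1)]] by simp_all
  moreover have "cross3 (Du F w) (Dv F w) \<noteq> 0"
    using local_param_immersion[OF chart] w(1) unfolding chart_normal_def by blast
  ultimately have "(F w \<bullet> n0)^2 = (F w \<bullet> F w) * (n0 \<bullet> n0)"
    by (intro orthogonal_cross3_inner_square)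
  moreover have "F w \<bullet> F w = 1" "n0 \<bullet> n0 = 1"
    using unit_sphere[OF w(2)] assms(5) by (simp_all add: norm_eq_1)
  moreover have "F w \<bullet> n0 = k0"
    using assms(4)[OF local_param_in[OF chart w(1)]] local_param_eq[OF chart w(1)] by simp
  ultimately have "k0^2 = 1"
    by simp
  with planar_solution_level_lt_1[OF assms(1,4,5)] show False
    by (auto simp: power2_eq_1_iff)
qed

lemma tangent_coordinates_right_inverse:
  fixes u v :: "real^3"
  assumes "cross3 u v \<noteq> 0"
  obtains Q where "bounded_linear Q"
    "(\<lambda>h. (u \<bullet> (fst h *\<^sub>R u + snd h *\<^sub>R v), v \<bullet> (fst h *\<^sub>R u + snd h *\<^sub>R v))) \<circ> Q = id"
proof -
  define E Fm G where "E = u \<bullet> u" and "Fm = u \<bullet> v" and "G = v \<bullet> v"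
  define De where "De = E * G - Fm^2"
  define Q where "Q y = ((G * fst y - Fm * snd y) / De, (E * snd y - Fm * fst y) / De)" for y :: "real \<times> real"
  have "De > 0"
    using gram_det_pos[OF assms] unfolding De_def E_def Fm_def G_def .
  have "bounded_linear Q"
    unfolding Q_def by (intro linear_conv_bounded_linear[THEN iffD1] linearI)
      (auto simp: algebra_simps add_divide_distrib diff_divide_distrib)
  moreover have "(u \<bullet> (fst (Q y) *\<^sub>R u + snd (Q y) *\<^sub>R v), v \<bullet> (fst (Q y) *\<^sub>R u + snd (Q y) *\<^sub>R v)) = y" for y
  proof -
    have "(u \<bullet> (fst (Q y) *\<^sub>R u + snd (Q y) *\<^sub>R v), v \<bullet> (fst (Q y) *\<^sub>R u + snd (Q y) *\<^sub>R v))
      = ((E * (G * fst y - Fm * snd y) + Fm * (E * snd y - Fm * fst y)) / De,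
         (Fm * (G * fst y - Fm * snd y) + G * (E * snd y - Fm * fst y)) / De)"
      unfolding Q_def E_def Fm_def G_def
      by (simp add: inner_add_right inner_commute add_divide_distrib diff_divide_distrib algebra_simps)
    also have "\<dots> = y"
      using \<open>De > 0\<close> unfolding De_def by (cases y) (simp add: field_simps power2_eq_square)
    finally show ?thesis .
  qed
  ultimately show ?thesis
    using that[of Q] by (simp add: o_def fun_eq_iff)
qed

lemma chart_tangent_projection_covers_ball:
  assumes "smooth_on W F" "open W" "ball w r \<subseteq> W" "r > 0" "chart_normal F w \<noteq> 0"
  obtains \<delta> where "\<delta> > 0"
    "ball (Du F w \<bullet> F w, Dv F w \<bullet> F w) \<delta> \<subseteq> (\<lambda>z. (Du F w \<bullet> F z, Dv F w \<bullet> F z)) ` ball w r"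
proof -
  define u v where "u = Du F w" and "v = Dv F w"
  define P where "P z = (u \<bullet> F z, v \<bullet> F z)" for z
  obtain Q where "bounded_linear Q"
    "(\<lambda>h. (u \<bullet> (fst h *\<^sub>R u + snd h *\<^sub>R v), v \<bullet> (fst h *\<^sub>R u + snd h *\<^sub>R v))) \<circ> Q = id"
    using tangent_coordinates_right_inverse assms(5) unfolding u_def v_def chart_normal_def by blast
  moreover have "w \<in> W"
    using assms(3,4) by auto
  then have "(P has_derivative (\<lambda>h. (u \<bullet> (fst h *\<^sub>R u + snd h *\<^sub>R v), v \<bullet> (fst h *\<^sub>R u + snd h *\<^sub>R v))))
      (at w)"
    using has_derivative_Pair[OF has_derivative_inner[OF has_derivative_const chart_has_derivative]
        has_derivative_inner[OF has_derivative_const chart_has_derivative]] assms(1,2)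
    unfolding P_def u_def v_def by simp
  moreover have "continuous_on (ball w r) P"
    using smooth_on_continuous_on[OF assms(1), of "[]"] continuous_on_subset[OF _ assms(3)]
    unfolding P_def by (auto intro!: continuous_intros)
  ultimately have "P w \<in> interior (P ` ball w r)"
    using sussmann_open_mapping[of "ball w r" P w _ Q "ball w r"] assms(4) by simp
  with open_contains_ball[THEN iffD1, OF open_interior]
  have "\<exists>\<delta>>0. ball (P w) \<delta> \<subseteq> interior (P ` ball w r)"
    by (rule bspec)
  then obtain \<delta> where "\<delta> > 0" "ball (P w) \<delta> \<subseteq> interior (P ` ball w r)"
    by blast
  moreover have "interior (P ` ball w r) \<subseteq> P ` ball w r"
    by (rule interior_subset)
  ultimately show ?thesis
    using that unfolding P_def u_def v_def by blast
qed

lemma dist_inner_pair_le: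
  fixes u v x y :: "'a::real_inner"
  shows "dist (u \<bullet> x, v \<bullet> x) (u \<bullet> y, v \<bullet> y) \<le> (norm u + norm v) * dist x y"
proof -
  have "dist (u \<bullet> x, v \<bullet> x) (u \<bullet> y, v \<bullet> y) \<le> dist (u \<bullet> x) (u \<bullet> y) + dist (v \<bullet> x) (v \<bullet> y)"
    by (simp add: dist_Pair_Pair sqrt_sum_squares_le_sum)
  also have "\<dots> \<le> norm u * dist x y + norm v * dist x y"
    using Cauchy_Schwarz_ineq2[of u "x - y"] Cauchy_Schwarz_ineq2[of v "x - y"]
    by (simp add: dist_norm inner_diff_right)
  finally show ?thesis
    by (simp add: algebra_simps)
qed

lemma ball_snd_subset_halfplane: "ball w (snd w) \<subseteq> halfplane"
proof
  fix z assume "z \<in> ball w (snd w)"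
  moreover have "\<bar>snd w - snd z\<bar> \<le> dist w z"
    using dist_snd_le[of w z] by (simp add: dist_real_def)
  ultimately show "z \<in> halfplane"
    by (auto simp: halfplane_def)
qed

lemma interior_point_chart_ball:
  assumes "free_boundary_solution M X" "local_param M X p W \<psi> F" "p \<in> M" "norm (X p) < 1"
    and "w0 \<in> W \<inter> halfplane" "\<psi> w0 = p"
  obtains r where "r > 0" "ball w0 r \<subseteq> W \<inter> halfplane"
proof -
  have "snd w0 > 0"
  proof (rule ccontr)
    assume "\<not> snd w0 > 0"
    with assms(5) have "w0 \<in> W" "snd w0 = 0"
      by (auto simp: halfplane_def)
    then have "p \<in> surface_boundary M X"
      using assms(2,3,6) unfolding surface_boundary_def by blast
    with free_boundary_solution_boundary[OF assms(1,3)] assms(4) show False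
      by simp
  qed
  obtain r0 where "r0 > 0" "ball w0 r0 \<subseteq> W"
    using local_param_open[OF assms(2)] assms(5) open_contains_ball by blast
  with \<open>snd w0 > 0\<close> ball_snd_subset_halfplane[of w0] have "min r0 (snd w0) > 0"
    "ball w0 (min r0 (snd w0)) \<subseteq> W \<inter> halfplane"
    by auto
  then show ?thesis
    by (rule that)
qed

text \<open>Near an interior point the surface is a graph over its tangent plane, which is the plane
  itself.\<close>
lemma planar_solution_image_contains_plane_nbhd:
  assumes "free_boundary_solution M X" "unit_normal M X \<nu>"
    and "\<And>q. q \<in> M \<Longrightarrow> \<nu> q = n0" "\<And>q. q \<in> M \<Longrightarrow> X q \<bullet> n0 = k0"
    and "p \<in> M" "norm (X p) < 1"
  obtains e where "e > 0" "\<And>y. n0 \<bullet> y = k0 \<Longrightarrow> dist y (X p) < e \<Longrightarrow> y \<in> X ` M"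
proof -
  obtain W \<psi> F where chart: "local_param M X p W \<psi> F"
    using free_boundary_solution_chart[OF assms(1,5)] by blast
  obtain w0 where w0: "w0 \<in> W \<inter> halfplane" "\<psi> w0 = p"
    using local_param_center[OF chart] by blast
  obtain r where r: "r > 0" "ball w0 r \<subseteq> W \<inter> halfplane"
    by (rule interior_point_chart_ball[OF assms(1) chart assms(5,6) w0])
  define u v where "u = Du F w0" and "v = Dv F w0"
  have "chart_normal F w0 \<noteq> 0"
    using local_param_immersion[OF chart] w0(1) by blast
  then obtain \<delta> where "\<delta> > 0" and \<delta>: "ball (u \<bullet> F w0, v \<bullet> F w0) \<delta> \<subseteq> (\<lambda>z. (u \<bullet> F z, v \<bullet> F z)) ` ball w0 r"
    using chart_tangent_projection_covers_ball[OF local_param_smooth[OF chart] local_param_open[OF chart] _ r(1)] r(2)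
    unfolding u_def v_def by blast
  have n0: "n0 \<bullet> u = 0" "n0 \<bullet> v = 0" "n0 \<noteq> 0"
    using unit_normal_in_chart(1,2)[OF assms(2) chart w0(1)] assms(3)[OF assms(5)] w0(2) assms(2,5)
    unfolding u_def v_def unit_normal_def by auto
  define e where "e = \<delta> / (norm u + norm v + 1)"
  have "norm u + norm v + 1 > 0"
    by (simp add: add_nonneg_pos)
  have "y \<in> X ` M" if y: "n0 \<bullet> y = k0" "dist y (X p) < e" for y
  proof -
    have "dist (u \<bullet> y, v \<bullet> y) (u \<bullet> F w0, v \<bullet> F w0) \<le> (norm u + norm v) * dist y (X p)"
      using dist_inner_pair_le[of u y v "X p"] local_param_eq[OF chart w0(1)] w0(2) by simp
    also have "\<dots> \<le> (norm u + norm v + 1) * dist y (X p)"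
      by (intro mult_right_mono) auto
    also have "\<dots> < \<delta>"
      using y(2) \<open>norm u + norm v + 1 > 0\<close> by (simp add: e_def pos_less_divide_eq mult.commute)
    finally obtain w where w: "w \<in> ball w0 r" "u \<bullet> F w = u \<bullet> y" "v \<bullet> F w = v \<bullet> y"
      using \<delta> by (force simp: dist_commute)
    then have "w \<in> W \<inter> halfplane"
      using r(2) by blast
    then have "F w \<bullet> n0 = y \<bullet> n0" "X (\<psi> w) = F w" "\<psi> w \<in> M"
      using assms(4)[OF local_param_in[OF chart]] local_param_eq[OF chart] local_param_in[OF chart] y(1)
      by (simp_all add: inner_commute)
    moreover have "F w = y"
      using eq_if_inner_eq_tangent_normal[OF _ n0] w(2,3) \<open>chart_normal F w0 \<noteq> 0\<close> \<open>F w \<bullet> n0 = y \<bullet> n0\<close>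
      unfolding u_def v_def chart_normal_def by (simp add: inner_commute)
    ultimately show ?thesis
      by (metis image_eqI)
  qed
  moreover have "e > 0"
    using \<open>\<delta> > 0\<close> \<open>norm u + norm v + 1 > 0\<close> by (simp add: e_def)
  ultimately show ?thesis
    using that by blast
qed

lemma closure_unit_ball_Int_hyperplane:
  fixes n :: "'a::euclidean_space"
  assumes "\<bar>k\<bar> < 1" "norm n = 1"
  shows "closure (ball 0 1 \<inter> {x. n \<bullet> x = k}) = cball 0 1 \<inter> {x. n \<bullet> x = k}"
proof -
  have "k *\<^sub>R n \<in> ball 0 1 \<inter> {x. n \<bullet> x = k}"
    using assms by (simp add: norm_eq_1[symmetric] power2_eq_square[symmetric] power2_norm_eq_inner[symmetric])
  moreover have "rel_interior (ball (0::'a) 1) = ball 0 1" "rel_interior {x. n \<bullet> x = k} = {x. n \<bullet> x = k}"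
    by (simp_all add: rel_interior_open rel_interior_affine affine_hyperplane)
  ultimately have "rel_interior (ball 0 1) \<inter> rel_interior {x. n \<bullet> x = k} \<noteq> {}"
    by (metis empty_iff)
  then show ?thesis
    using closure_Int_convex[of "ball 0 1" "{x. n \<bullet> x = k}"]
    by (simp add: convex_hyperplane closed_hyperplane closure_closed)
qed

lemma free_boundary_solution_image_closed:
  assumes "free_boundary_solution M X"
  shows "closed (X ` M)"
  using compact_continuous_image[OF immersed_surface_continuous[OF free_boundary_solution_immersed[OF assms]]
      free_boundary_solution_compact[OF assms]] by (rule compact_imp_closed)

text \<open>The image meets the connected open disc in a nonempty set that is open and closed in it.\<close>
lemma planar_solution_image_contains_open_disc:
  assumes "free_boundary_solution M X" "unit_normal M X \<nu>"
    and "\<And>q. q \<in> M \<Longrightarrow> \<nu> q = n0" "\<And>q. q \<in> M \<Longrightarrow> X q \<bullet> n0 = k0" "norm n0 = 1"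
  shows "ball 0 1 \<inter> {x. n0 \<bullet> x = k0} \<subseteq> X ` M"
proof -
  define D where "D = ball 0 1 \<inter> {x. n0 \<bullet> x = k0}"
  have "openin (top_of_set D) (D \<inter> X ` M)"
    unfolding openin_euclidean_subtopology_iff
  proof (intro conjI ballI)
    fix y assume "y \<in> D \<inter> X ` M"
    then obtain q where "q \<in> M" "y = X q" "norm (X q) < 1"
      unfolding D_def by auto
    then obtain e where "e > 0" "\<And>x. n0 \<bullet> x = k0 \<Longrightarrow> dist x (X q) < e \<Longrightarrow> x \<in> X ` M"
      using planar_solution_image_contains_plane_nbhd[OF assms(1-4)] by blast
    with \<open>y = X q\<close> show "\<exists>e>0. \<forall>x\<in>D. dist x y < e \<longrightarrow> x \<in> D \<inter> X ` M"
      unfolding D_def by blast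
  qed auto
  moreover have "closedin (top_of_set D) (D \<inter> X ` M)"
    using free_boundary_solution_image_closed[OF assms(1)] by (rule closedin_closed_Int)
  moreover have "connected D"
    unfolding D_def by (intro convex_connected convex_Int convex_ball convex_hyperplane)
  moreover obtain p where "p \<in> M" "norm (X p) < 1"
    using planar_solution_has_interior_point[OF assms] by blast
  then have "X p \<in> D \<inter> X ` M"
    using assms(4) by (auto simp: D_def inner_commute)
  ultimately show ?thesis
    unfolding connected_clopen D_def by blast
qed

lemma planar_solution_is_plane_disk:
  assumes "free_boundary_solution M X" "unit_normal M X \<nu>"
    and "\<And>q. q \<in> M \<Longrightarrow> \<nu> q = n0" "\<And>q. q \<in> M \<Longrightarrow> X q \<bullet> n0 = k0" "norm n0 = 1"
  shows "plane_disk M X"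
proof -
  have "closure (ball 0 1 \<inter> {x. n0 \<bullet> x = k0}) = cball 0 1 \<inter> {x. n0 \<bullet> x = k0}"
    using planar_solution_level_lt_1[OF assms(1,4,5)] assms(5) by (rule closure_unit_ball_Int_hyperplane)
  then have "cball 0 1 \<inter> {x. n0 \<bullet> x = k0} \<subseteq> X ` M"
    using planar_solution_image_contains_open_disc[OF assms] free_boundary_solution_image_closed[OF assms(1)]
    by (metis closure_minimal)
  moreover have "X ` M \<subseteq> cball 0 1 \<inter> {x. n0 \<bullet> x = k0}"
    using free_boundary_solution_in_ball[OF assms(1)] assms(4) by (auto simp: inner_commute)
  ultimately have "X ` M = {x. norm x \<le> 1 \<and> n0 \<bullet> x = k0}"
    by auto
  moreover have "n0 \<noteq> 0"
    using assms(5) by auto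
  ultimately show ?thesis
    unfolding plane_disk_def by blast
qed

section \<open>Linear independence\<close>

lemma normal_support_relation_trivial:
  assumes "free_boundary_solution M X" "unit_normal M X \<nu>" "\<not> plane_disk M X"
    and "\<And>q. q \<in> M \<Longrightarrow> a \<bullet> \<nu> q + c * (X q \<bullet> \<nu> q) = 0"
  shows "a = 0 \<and> c = 0"
proof (rule ccontr)
  assume "\<not> (a = 0 \<and> c = 0)"
  then have "\<nu> constant_on M" "(\<lambda>q. X q \<bullet> \<nu> q) constant_on M"
    using constant_normal_and_support[OF assms(1,2,4)] by auto
  moreover obtain p where "p \<in> M"
    using free_boundary_solution_nonempty[OF assms(1)] by blast
  ultimately have "\<nu> q = \<nu> p" "X q \<bullet> \<nu> p = X p \<bullet> \<nu> p" if "q \<in> M" for q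
    using that unfolding constant_on_def by metis+
  moreover have "norm (\<nu> p) = 1"
    using assms(2) \<open>p \<in> M\<close> unfolding unit_normal_def by blast
  ultimately have "plane_disk M X"
    using planar_solution_is_plane_disk[OF assms(1,2)] by blast
  with assms(3) show False ..
qed

lemma dim_four_independent_functions:
  fixes f1 f2 f3 f4 :: "'a \<Rightarrow> real"
  assumes "\<And>b1 b2 b3 b4. (\<And>p. b1 * f1 p + b2 * f2 p + b3 * f3 p + b4 * f4 p = 0) \<Longrightarrow>
    b1 = 0 \<and> b2 = 0 \<and> b3 = 0 \<and> b4 = 0"
  shows "vector_space.dim (\<lambda>(c::real) (f::'a \<Rightarrow> real). \<lambda>p. c * f p) {f1, f2, f3, f4} = 4"
proof -
  interpret V: vector_space "\<lambda>(c::real) (f::'a \<Rightarrow> real). \<lambda>p. c * f p"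
    by unfold_locales (auto simp: fun_eq_iff algebra_simps)
  have distinct: "f1 \<noteq> f2" "f1 \<noteq> f3" "f1 \<noteq> f4" "f2 \<noteq> f3" "f2 \<noteq> f4" "f3 \<noteq> f4"
    using assms[of 1 "-1" 0 0] assms[of 1 0 "-1" 0] assms[of 1 0 0 "-1"]
      assms[of 0 1 "-1" 0] assms[of 0 1 0 "-1"] assms[of 0 0 1 "-1"] by auto
  have "V.independent {f1, f2, f3, f4}"
  proof
    assume "V.dependent {f1, f2, f3, f4}"
    then obtain u where u: "\<exists>v\<in>{f1, f2, f3, f4}. u v \<noteq> 0" "(\<Sum>v\<in>{f1, f2, f3, f4}. (\<lambda>p. u v * v p)) = 0"
      using V.dependent_finite[of "{f1, f2, f3, f4}"] by auto
    have "u f1 * f1 p + u f2 * f2 p + u f3 * f3 p + u f4 * f4 p = 0" for p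
      using fun_cong[OF u(2), of p] distinct by (simp add: add.assoc)
    then show False
      using assms u(1) by blast
  qed
  with distinct show ?thesis
    using V.dim_eq_card_independent by simp
qed

theorem lemma6p4:
  fixes M :: "'a::t2_space set" and X \<nu> :: "'a \<Rightarrow> real^3"
  assumes "free_boundary_solution M X"
    and "unit_normal M X \<nu>"
    and "\<not> plane_disk M X"
  shows "vector_space.dim (\<lambda>(c::real) (f::'a \<Rightarrow> real). \<lambda>p. c * f p)
           {fun_on M (\<lambda>p. \<nu> p $ 1), fun_on M (\<lambda>p. \<nu> p $ 2), fun_on M (\<lambda>p. \<nu> p $ 3),
            fun_on M (\<lambda>p. X p \<bullet> \<nu> p)} = 4"
proof (rule dim_four_independent_functions)
  fix b1 b2 b3 b4 :: real
  assume relation: "\<And>p. b1 * fun_on M (\<lambda>p. \<nu> p $ 1) p + b2 * fun_on M (\<lambda>p. \<nu> p $ 2) p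
    + b3 * fun_on M (\<lambda>p. \<nu> p $ 3) p + b4 * fun_on M (\<lambda>p. X p \<bullet> \<nu> p) p = 0"
  define a :: "real^3" where "a = vector [b1, b2, b3]"
  have "a \<bullet> \<nu> q + b4 * (X q \<bullet> \<nu> q) = 0" if "q \<in> M" for q
    using relation[of q] that by (simp add: fun_on_def a_def inner_vec_def sum_3 vector_3)
  then have "a = 0 \<and> b4 = 0"
    by (rule normal_support_relation_trivial[OF assms])
  then show "b1 = 0 \<and> b2 = 0 \<and> b3 = 0 \<and> b4 = 0"
    by (simp add: a_def vec_eq_iff forall_3 vector_3)
qed

end
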